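(* Let $\mathbb{F}\in\{\mathbb{R},\mathbb{C}\}$ and let $A\in\mathbb{F}^{n\times n}$ be normal, with eigenvalues $\lambda_1,\dots,\lambda_n$. Let $f,\varphi_1,\dots,\varphi_k$ be (scalar, complex-valued) functions defined at each eigenvalue of $A$. In the case $\mathbb{F}=\mathbb{R}$ assume in addition that for every eigenvalue $\lambda_j$ of $A$, \[ \overline{f(\lambda_j)}=f(\overline{\lambda_j})\quad\text{and}\quad \overline{\varphi_i(\lambda_j)}=\varphi_i(\overline{\lambda_j}),\quad i=1,\dots,k, \] so that $f(A),\varphi_1(A),\dots,\varphi_k(A)$ are real matrices. Let $\mathcal{P}_k(\mathbb{F})=\{\alpha_1\varphi_1+\dots+\alpha_k\varphi_k:\ \alpha_1,\dots,\alpha_k\in\mathbb{F}\}$. Then \[ \max_{v\in\mathbb{F}^n,\ \|v\|=1}\ \min_{p\in\mathcal{P}_k(\mathbb{F})}\|f(A)v-p(A)v\| \;=\; \min_{p\in\mathcal{P}_k(\mathbb{F})}\|f(A)-p(A)\|, \] where $\|\cdot\|$ denotes the Euclidean norm on vectors and the induced spectral norm on matrices.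
   Context: For a normal matrix $A=Q\Lambda Q^H$ with $Q$ unitary and $\Lambda=\mathrm{diag}(\lambda_1,\dots,\lambda_n)$, and a function $g$ defined on the eigenvalues, the matrix function is $g(A)=Q\,\mathrm{diag}(g(\lambda_1),\dots,g(\lambda_n))\,Q^H$. For $p=\sum_i\alpha_i\varphi_i$, $p(A)=\sum_i\alpha_i\varphi_i(A)$. *)

theory Defs
  imports "Jordan_Normal_Form.Matrix" "Jordan_Normal_Form.Char_Poly"
begin

definition ctrans :: "complex mat \<Rightarrow> complex mat" where
  "ctrans A = mat (dim_col A) (dim_row A) (\<lambda>(i,j). cnj (A $$ (j,i)))"

definition unitary_mat :: "nat \<Rightarrow> complex mat \<Rightarrow> bool" where
  "unitary_mat n Q \<longleftrightarrow> Q \<in> carrier_mat n n \<and> Q * ctrans Q = 1\<^sub>m n \<and> ctrans Q * Q = 1\<^sub>m n"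

definition normal_mat :: "nat \<Rightarrow> complex mat \<Rightarrow> bool" where
  "normal_mat n A \<longleftrightarrow> A \<in> carrier_mat n n \<and> A * ctrans A = ctrans A * A"

text \<open>Matrix function of a normal matrix: g(A) = Q diag(g(lambda_i)) Q^H for any unitary
  diagonalisation A = Q diag(lambda_i) Q^H (the result does not depend on the choice).\<close>
definition matfun :: "(complex \<Rightarrow> complex) \<Rightarrow> complex mat \<Rightarrow> complex mat" where
  "matfun g A = (SOME M. \<exists>Q lam. unitary_mat (dim_row A) Q \<and>
      A = Q * mat_diag (dim_row A) lam * ctrans Q \<and>
      M = Q * mat_diag (dim_row A) (\<lambda>i. g (lam i)) * ctrans Q)"

fun pmat :: "nat \<Rightarrow> (nat \<Rightarrow> complex) \<Rightarrow> (nat \<Rightarrow> complex \<Rightarrow> complex) \<Rightarrow> complex mat \<Rightarrow> complex mat" where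
  "pmat 0 alpha phi A = 0\<^sub>m (dim_row A) (dim_col A)"
| "pmat (Suc k) alpha phi A = pmat k alpha phi A + alpha k \<cdot>\<^sub>m matfun (phi k) A"

definition vnorm :: "complex vec \<Rightarrow> real" where
  "vnorm v = sqrt (\<Sum>i<dim_vec v. (cmod (v $ i))\<^sup>2)"

text \<open>Vectors of length n with entries in the scalar field K (K = \<real> or K = UNIV).\<close>
definition Kvecs :: "complex set \<Rightarrow> nat \<Rightarrow> complex vec set" where
  "Kvecs K n = {v. dim_vec v = n \<and> (\<forall>i<n. v $ i \<in> K)}"

definition snorm :: "complex set \<Rightarrow> nat \<Rightarrow> complex mat \<Rightarrow> real" where
  "snorm K n M = (SUP v \<in> {v \<in> Kvecs K n. vnorm v = 1}. vnorm (M *\<^sub>v v))"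

definition is_min :: "real set \<Rightarrow> real \<Rightarrow> bool" where
  "is_min S m \<longleftrightarrow> m \<in> S \<and> (\<forall>x\<in>S. m \<le> x)"

definition is_max :: "real set \<Rightarrow> real \<Rightarrow> bool" where
  "is_max S m \<longleftrightarrow> m \<in> S \<and> (\<forall>x\<in>S. x \<le> m)"

end

theory Submission
  imports Defs "Jordan_Normal_Form.Schur_Decomposition" "Jordan_Normal_Form.Spectral_Radius"
    "HOL-Analysis.Function_Topology" "HOL-Analysis.L2_Norm" "HOL-Analysis.Lipschitz"
    "HOL-Analysis.Complex_Analysis_Basics"
begin

text \<open>Write \<open>A = Q diag(\<lambda>) Q\<^sup>H\<close>. For a unit vector \<open>v\<close> with coordinates \<open>c = Q\<^sup>H v\<close>,
  \<open>\<parallel>(f - p)(A) v\<parallel>\<^sup>2 = \<Sum>\<^sub>j |f - p|\<^sup>2(\<lambda>\<^sub>j) |c\<^sub>j|\<^sup>2\<close>, which is at most the squared maximum of \<open>|f - p|\<close>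
  on the spectrum; this gives "\<open>\<le>\<close>" and reduces the right-hand side to best uniform approximation on the
  finite set of eigenvalues. An optimal \<open>p\<^sup>*\<close> is characterised by weights \<open>w \<ge> 0\<close> with \<open>\<Sum> w = 1\<close> on
  the points where \<open>|f - p\<^sup>*|\<close> is maximal such that \<open>\<Sum>\<^sub>\<mu> w(\<mu>) |f - p|\<^sup>2(\<mu>) \<ge> \<parallel>f - p\<^sup>*\<parallel>\<^sub>\<infinity>\<^sup>2\<close> for
  every \<open>p\<close>: otherwise the point of minimal norm in the convex hull of the gradients of
  \<open>|f - p|\<^sup>2\<close> at these points would be a descent direction. A unit vector whose component in each
  eigenspace has squared norm \<open>w(\<mu>)\<close> then attains the right-hand side. Over \<open>\<real>\<close> the weights can be
  symmetrised under conjugation, and the vector is then real because conjugate eigenvalues of a real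
  matrix have conjugate spectral projections.\<close>

section \<open>The scalar fields \<open>\<real>\<close> and \<open>\<complex>\<close> inside \<open>\<complex>\<close>\<close>

definition real_or_complex :: "complex set \<Rightarrow> bool" where
  "real_or_complex K \<longleftrightarrow> K = \<real> \<or> K = UNIV"

lemma real_or_complex_closed:
  assumes "real_or_complex K"
  shows "0 \<in> K" "1 \<in> K" "-1 \<in> K" "complex_of_real r \<in> K"
    "a \<in> K \<Longrightarrow> b \<in> K \<Longrightarrow> a + b \<in> K"
    "a \<in> K \<Longrightarrow> b \<in> K \<Longrightarrow> a - b \<in> K"
    "a \<in> K \<Longrightarrow> b \<in> K \<Longrightarrow> a * b \<in> K"
    "a \<in> K \<Longrightarrow> inverse a \<in> K"
  using assms unfolding real_or_complex_def by auto

lemma real_or_complex_sum: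
  "real_or_complex K \<Longrightarrow> (\<And>i. i \<in> S \<Longrightarrow> g i \<in> K) \<Longrightarrow> sum g S \<in> K"
  by (induction S rule: infinite_finite_induct) (auto simp: real_or_complex_closed)

lemma complex_mult_cnj_cmod: "z * cnj z = (complex_of_real (cmod z))\<^sup>2"
  by (simp add: complex_norm_square[symmetric])

lemma cmod_add_real_mult_sq:
  "(cmod (w + complex_of_real t * d))\<^sup>2 = (cmod w)\<^sup>2 + 2 * t * Re (d * cnj w) + t\<^sup>2 * (cmod d)\<^sup>2"
  unfolding cmod_power2 by (simp add: power2_eq_square algebra_simps)

lemma cmod_diff_sq_ge: "(cmod w)\<^sup>2 - 2 * Re (cnj w * d) \<le> (cmod (w - d))\<^sup>2"
proof -
  have "(cmod (w - d))\<^sup>2 = (cmod w)\<^sup>2 - 2 * Re (cnj w * d) + (cmod d)\<^sup>2"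
    unfolding cmod_power2 by (simp add: power2_eq_square algebra_simps)
  then show ?thesis by simp
qed

lemma closed_real_or_complex: "real_or_complex K \<Longrightarrow> closed K"
  unfolding real_or_complex_def using closed_complex_Reals by auto

text \<open>The orthogonal projection of \<open>\<complex>\<close> onto \<open>K\<close> with respect to the real inner product \<open>Re (z * cnj b)\<close>.\<close>

definition proj_scalar :: "complex set \<Rightarrow> complex \<Rightarrow> complex" where
  "proj_scalar K z = (if K = \<real> then complex_of_real (Re z) else z)"

lemma proj_scalar_in: "real_or_complex K \<Longrightarrow> proj_scalar K z \<in> K"
  unfolding proj_scalar_def real_or_complex_def by auto

lemma Re_mult_proj_scalar:
  assumes "real_or_complex K" and "b \<in> K"
  shows "Re (z * cnj b) = Re (proj_scalar K z * cnj b)"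
  using assms unfolding proj_scalar_def real_or_complex_def by (auto elim: Reals_cases)


section \<open>Best approximation with respect to a seminorm\<close>

text \<open>Both the residual norm \<open>\<parallel>(f - p)(A) v\<parallel>\<close> and the maximum of \<open>|f - p|\<close> over the spectrum are
  such seminorms of \<open>f - p\<close>.\<close>

locale scalar_seminorm =
  fixes K :: "complex set" and N :: "(complex \<Rightarrow> complex) \<Rightarrow> real"
  assumes scalars: "real_or_complex K"
    and triangle: "\<And>g h. N (\<lambda>x. g x + h x) \<le> N g + N h"
    and homogeneous: "\<And>z g. z \<in> K \<Longrightarrow> N (\<lambda>x. z * g x) = cmod z * N g"

lemma scalar_seminormI:
  assumes K: "real_or_complex K" and triangle: "\<And>g h. N (\<lambda>x. g x + h x) \<le> N g + N h"
    and mult_le: "\<And>z g. z \<in> K \<Longrightarrow> N (\<lambda>x. z * g x) \<le> cmod z * N g"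
    and nonneg: "\<And>g. N g \<ge> 0"
  shows "scalar_seminorm K N"
proof
  fix z g assume z: "z \<in> K"
  show "N (\<lambda>x. z * g x) = cmod z * N g"
  proof (cases "z = 0")
    case True
    then show ?thesis using mult_le[OF z, of g] nonneg[of "\<lambda>x. z * g x"] by simp
  next
    case False
    \<comment> \<open>the reverse inequality is the one for the scalar \<open>1 / z\<close>\<close>
    have "N g = N (\<lambda>x. inverse z * (z * g x))" using False by (simp add: field_simps)
    also have "\<dots> \<le> cmod (inverse z) * N (\<lambda>x. z * g x)"
      by (rule mult_le) (use z K in \<open>simp add: real_or_complex_closed\<close>)
    finally have "cmod z * N g \<le> cmod z * (cmod (inverse z) * N (\<lambda>x. z * g x))"
      by (rule mult_left_mono) simp
    also have "\<dots> = N (\<lambda>x. z * g x)" using False by (simp add: norm_inverse)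
    finally show ?thesis using mult_le[OF z, of g] by simp
  qed
qed (fact K triangle)+

context scalar_seminorm
begin

lemmas scalars_closed = real_or_complex_closed[OF scalars]

lemma nonneg: "N g \<ge> 0"
proof -
  have "N (\<lambda>x. g x + (-1) * g x) \<le> N g + N (\<lambda>x. (-1) * g x)" by (rule triangle)
  also have "N (\<lambda>x. (-1) * g x) = N g" using homogeneous[of "-1" g] scalars_closed by simp
  also have "N (\<lambda>x. g x + (-1) * g x) = N (\<lambda>x. 0 * g x)" by simp
  also have "\<dots> = 0" using homogeneous[of 0 g] scalars_closed by simp
  finally show ?thesis by simp
qed

lemma diff_mult_le:
  assumes "s \<in> K" "t \<in> K"
  shows "N (\<lambda>x. g x - t * h x) \<le> N (\<lambda>x. g x - s * h x) + cmod (t - s) * N h"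
proof -
  have "N (\<lambda>x. g x - t * h x) = N (\<lambda>x. (g x - s * h x) + (s - t) * h x)"
    by (simp add: algebra_simps)
  also have "\<dots> \<le> N (\<lambda>x. g x - s * h x) + N (\<lambda>x. (s - t) * h x)" by (rule triangle)
  also have "N (\<lambda>x. (s - t) * h x) = cmod (t - s) * N h"
    using homogeneous[of "s - t" h] assms scalars_closed by (simp add: norm_minus_commute)
  finally show ?thesis .
qed

lemma mult_le_add: "cmod t * N h \<le> N g + N (\<lambda>x. g x - t * h x)" if "t \<in> K"
proof -
  have "cmod t * N h = N (\<lambda>x. g x + (-1) * (g x - t * h x))"
    using homogeneous[OF that, of h] by (simp add: algebra_simps)
  also have "\<dots> \<le> N g + N (\<lambda>x. (-1) * (g x - t * h x))" by (rule triangle)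
  also have "N (\<lambda>x. (-1) * (g x - t * h x)) = cmod (-1) * N (\<lambda>x. g x - t * h x)"
    by (rule homogeneous) (rule scalars_closed)
  finally show ?thesis by simp
qed

lemma exists_best_multiple: "\<exists>t0\<in>K. \<forall>t\<in>K. N (\<lambda>x. g x - t0 * h x) \<le> N (\<lambda>x. g x - t * h x)"
proof -
  define F where "F t = N (\<lambda>x. g x - t * h x)" for t
  have F0: "F 0 = N g" unfolding F_def by simp
  show ?thesis
  proof (cases "N h = 0")
    case True
    have "F 0 \<le> F t" if "t \<in> K" for t
      using diff_mult_le[of t 0 g h] that scalars_closed(1) True unfolding F_def by simp
    then show ?thesis using scalars_closed(1) unfolding F_def by blast
  next
    case False
    then have Nh: "N h > 0" using nonneg[of h] by simp
    \<comment> \<open>outside the ball of radius \<open>2 F 0 / N h\<close> the function \<open>F\<close> exceeds \<open>F 0\<close>\<close>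
    define S where "S = K \<inter> cball 0 (2 * F 0 / N h)"
    have "compact S"
      unfolding S_def by (intro closed_Int_compact closed_real_or_complex scalars compact_cball)
    moreover have "0 \<in> S" unfolding S_def F_def using scalars_closed Nh nonneg by simp
    moreover have "(N h)-lipschitz_on K F"
    proof (rule lipschitz_onI)
      fix s t assume "s \<in> K" "t \<in> K"
      then show "dist (F s) (F t) \<le> N h * dist s t"
        using diff_mult_le[of s t] diff_mult_le[of t s] unfolding F_def dist_real_def dist_norm
        by (simp add: abs_le_iff norm_minus_commute algebra_simps)
    qed (use Nh in simp)
    then have "continuous_on S F"
      unfolding S_def by (rule continuous_on_subset[OF lipschitz_on_continuous_on]) simp
    ultimately obtain t0 where t0: "t0 \<in> S" "\<And>t. t \<in> S \<Longrightarrow> F t0 \<le> F t"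
      using continuous_attains_inf[of S F] by blast
    have "F t0 \<le> F t" if t: "t \<in> K" for t
    proof (cases "t \<in> S")
      case False
      then have "2 * F 0 < cmod t * N h" using t Nh by (auto simp: S_def not_le divide_less_eq)
      also have "\<dots> \<le> F 0 + F t" using mult_le_add[OF t] F0 unfolding F_def by simp
      finally show ?thesis using t0 \<open>0 \<in> S\<close> by fastforce
    qed (use t0 in blast)
    then show ?thesis using t0 unfolding S_def F_def by blast
  qed
qed

lemma best_residual_seminorm:
  assumes best: "\<And>g. (\<forall>i<m. a g i \<in> K) \<and> (\<forall>b. (\<forall>i<m. b i \<in> K) \<longrightarrow>
      N (\<lambda>x. g x - (\<Sum>i<m. a g i * phi i x)) \<le> N (\<lambda>x. g x - (\<Sum>i<m. b i * phi i x)))"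
  shows "scalar_seminorm K (\<lambda>g. N (\<lambda>x. g x - (\<Sum>i<m. a g i * phi i x)))"
proof (rule scalar_seminormI[OF scalars])
  define G where "G g = N (\<lambda>x. g x - (\<Sum>i<m. a g i * phi i x))" for g
  have G_le: "G g \<le> N (\<lambda>x. g x - (\<Sum>i<m. b i * phi i x))" if "\<forall>i<m. b i \<in> K" for g b
    using best[of g] that unfolding G_def by auto
  have aK: "a g i \<in> K" if "i < m" for g i using best[of g] that by blast
  fix g h
  have "G (\<lambda>x. g x + h x) \<le> N (\<lambda>x. (g x + h x) - (\<Sum>i<m. (a g i + a h i) * phi i x))"
    by (rule G_le) (simp add: aK scalars_closed)
  also have "\<dots> = N (\<lambda>x. (g x - (\<Sum>i<m. a g i * phi i x)) + (h x - (\<Sum>i<m. a h i * phi i x)))"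
    by (simp add: algebra_simps sum.distrib)
  also have "\<dots> \<le> G g + G h" unfolding G_def by (rule triangle)
  finally show "G (\<lambda>x. g x + h x) \<le> G g + G h" .
  fix z assume z: "z \<in> K"
  have "G (\<lambda>x. z * g x) \<le> N (\<lambda>x. z * g x - (\<Sum>i<m. (z * a g i) * phi i x))"
    by (rule G_le) (simp add: aK z scalars_closed)
  also have "\<dots> = N (\<lambda>x. z * (g x - (\<Sum>i<m. a g i * phi i x)))"
    by (simp add: algebra_simps sum_distrib_left)
  also have "\<dots> = cmod z * G g" unfolding G_def by (rule homogeneous[OF z])
  finally show "G (\<lambda>x. z * g x) \<le> cmod z * G g" .
qed (rule nonneg)

lemma exists_best_approximation:
  fixes m :: nat and phi :: "nat \<Rightarrow> complex \<Rightarrow> complex"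
  shows "\<exists>a. (\<forall>i<m. a i \<in> K) \<and> (\<forall>b. (\<forall>i<m. b i \<in> K) \<longrightarrow>
      N (\<lambda>x. g x - (\<Sum>i<m. a i * phi i x)) \<le> N (\<lambda>x. g x - (\<Sum>i<m. b i * phi i x)))"
proof (induction m arbitrary: g)
  case 0
  show ?case by simp
next
  case (Suc m)
  define a where "a g = (SOME a. (\<forall>i<m. a i \<in> K) \<and> (\<forall>b. (\<forall>i<m. b i \<in> K) \<longrightarrow>
      N (\<lambda>x. g x - (\<Sum>i<m. a i * phi i x)) \<le> N (\<lambda>x. g x - (\<Sum>i<m. b i * phi i x))))" for g
  have best: "(\<forall>i<m. a g i \<in> K) \<and> (\<forall>b. (\<forall>i<m. b i \<in> K) \<longrightarrow>
      N (\<lambda>x. g x - (\<Sum>i<m. a g i * phi i x)) \<le> N (\<lambda>x. g x - (\<Sum>i<m. b i * phi i x)))" for g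
    unfolding a_def by (rule someI_ex[OF Suc.IH])
  define G where "G g = N (\<lambda>x. g x - (\<Sum>i<m. a g i * phi i x))" for g
  interpret G: scalar_seminorm K G
    unfolding G_def by (rule best_residual_seminorm[OF best])
  \<comment> \<open>minimise first over the last coefficient, with the others chosen optimally\<close>
  obtain t0 where t0: "t0 \<in> K" "\<And>t. t \<in> K \<Longrightarrow> G (\<lambda>x. g x - t0 * phi m x) \<le> G (\<lambda>x. g x - t * phi m x)"
    using G.exists_best_multiple by blast
  define a' where "a' i = (if i = m then t0 else a (\<lambda>x. g x - t0 * phi m x) i)" for i
  show ?case
  proof (intro exI[of _ a'] conjI allI impI)
    fix i assume "i < Suc m" then show "a' i \<in> K" using best t0 unfolding a'_def by auto
  next
    fix b assume b: "\<forall>i<Suc m. b i \<in> K"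
    have "N (\<lambda>x. g x - (\<Sum>i<Suc m. a' i * phi i x)) = G (\<lambda>x. g x - t0 * phi m x)"
      unfolding G_def a'_def by (simp add: algebra_simps)
    also have "\<dots> \<le> G (\<lambda>x. g x - b m * phi m x)" using t0 b by simp
    also have "\<dots> \<le> N (\<lambda>x. (g x - b m * phi m x) - (\<Sum>i<m. b i * phi i x))"
      using best[of "\<lambda>x. g x - b m * phi m x"] b unfolding G_def by simp
    also have "\<dots> = N (\<lambda>x. g x - (\<Sum>i<Suc m. b i * phi i x))" by (simp add: algebra_simps)
    finally show "N (\<lambda>x. g x - (\<Sum>i<Suc m. a' i * phi i x)) \<le> N (\<lambda>x. g x - (\<Sum>i<Suc m. b i * phi i x))" .
  qed
qed

end


section \<open>Conjugate transpose and unitary matrices\<close>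

lemma index_mult_mat_sum:
  assumes "A \<in> carrier_mat n m" "B \<in> carrier_mat m p" "i < n" "j < p"
  shows "(A * B) $$ (i,j) = (\<Sum>l<m. A $$ (i,l) * B $$ (l,j))"
  using assms by (simp add: scalar_prod_def lessThan_atLeast0)

lemma index_mult_mat_vec_sum:
  assumes "A \<in> carrier_mat n m" "v \<in> carrier_vec m" "i < n"
  shows "(A *\<^sub>v v) $ i = (\<Sum>l<m. A $$ (i,l) * v $ l)"
  using assms by (simp add: scalar_prod_def lessThan_atLeast0)

lemma mult_carrier_mat_square [simp]:
  "A \<in> carrier_mat n n \<Longrightarrow> B \<in> carrier_mat n n \<Longrightarrow> A * B \<in> carrier_mat n n"
  by auto

lemma ctrans_carrier [simp]: "A \<in> carrier_mat n m \<Longrightarrow> ctrans A \<in> carrier_mat m n"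
  unfolding ctrans_def by auto

lemma ctrans_dim [simp]: "dim_row (ctrans A) = dim_col A" "dim_col (ctrans A) = dim_row A"
  unfolding ctrans_def by auto

lemma index_ctrans [simp]: "i < dim_col A \<Longrightarrow> j < dim_row A \<Longrightarrow> ctrans A $$ (i,j) = cnj (A $$ (j,i))"
  unfolding ctrans_def by auto

lemma ctrans_ctrans [simp]: "ctrans (ctrans A) = A"
  by (rule eq_matI) auto

lemma ctrans_mult:
  assumes "A \<in> carrier_mat n m" "B \<in> carrier_mat m p"
  shows "ctrans (A * B) = ctrans B * ctrans A"
proof (rule eq_matI)
  fix i j assume "i < dim_row (ctrans B * ctrans A)" "j < dim_col (ctrans B * ctrans A)"
  then have i: "i < p" and j: "j < n" using assms by auto
  have "ctrans (A * B) $$ (i,j) = (\<Sum>l<m. cnj (A $$ (j,l)) * cnj (B $$ (l,i)))"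
    using index_mult_mat_sum[OF assms j i] i j assms by simp
  also have "\<dots> = (ctrans B * ctrans A) $$ (i,j)"
    using assms i j by (subst index_mult_mat_sum[of _ p m _ n]) (auto simp: mult.commute)
  finally show "ctrans (A * B) $$ (i,j) = (ctrans B * ctrans A) $$ (i,j)" .
qed (use assms in auto)

lemma unitary_mat_carrier: "unitary_mat n Q \<Longrightarrow> Q \<in> carrier_mat n n"
  unfolding unitary_mat_def by auto

lemma unitary_mat_inverse:
  "unitary_mat n Q \<Longrightarrow> Q * ctrans Q = 1\<^sub>m n" "unitary_mat n Q \<Longrightarrow> ctrans Q * Q = 1\<^sub>m n"
  unfolding unitary_mat_def by auto

lemma unitary_mat_cols:
  assumes "unitary_mat n Q" "j < n" "l < n"
  shows "(\<Sum>a<n. cnj (Q $$ (a,j)) * Q $$ (a,l)) = of_bool (j = l)"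
proof -
  have Q: "Q \<in> carrier_mat n n" and QQ: "ctrans Q * Q = 1\<^sub>m n"
    using assms unfolding unitary_mat_def by auto
  have "(\<Sum>a<n. cnj (Q $$ (a,j)) * Q $$ (a,l)) = (ctrans Q * Q) $$ (j,l)"
    using Q assms by (subst index_mult_mat_sum[of _ n n _ n]) auto
  then show ?thesis using QQ assms by simp
qed

lemma unitary_mat_rows:
  assumes "unitary_mat n Q" "j < n" "l < n"
  shows "(\<Sum>a<n. Q $$ (j,a) * cnj (Q $$ (l,a))) = of_bool (j = l)"
proof -
  have Q: "Q \<in> carrier_mat n n" and QQ: "Q * ctrans Q = 1\<^sub>m n"
    using assms unfolding unitary_mat_def by auto
  have "(\<Sum>a<n. Q $$ (j,a) * cnj (Q $$ (l,a))) = (Q * ctrans Q) $$ (j,l)"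
    using Q assms by (subst index_mult_mat_sum[of _ n n _ n]) auto
  then show ?thesis using QQ assms by simp
qed

lemma unitary_matI:
  assumes Q: "Q \<in> carrier_mat n n"
    and cols: "\<And>j l. j < n \<Longrightarrow> l < n \<Longrightarrow> (\<Sum>a<n. cnj (Q $$ (a,j)) * Q $$ (a,l)) = of_bool (j = l)"
  shows "unitary_mat n Q"
proof -
  have "ctrans Q * Q = 1\<^sub>m n"
  proof (rule eq_matI)
    fix j l assume "j < dim_row (1\<^sub>m n)" "l < dim_col (1\<^sub>m n)"
    then show "(ctrans Q * Q) $$ (j,l) = 1\<^sub>m n $$ (j,l)"
      using Q cols by (subst index_mult_mat_sum[of _ n n _ n]) auto
  qed (use Q in auto)
  moreover have "Q * ctrans Q = 1\<^sub>m n"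
    using mat_mult_left_right_inverse[OF ctrans_carrier[OF Q] Q] calculation by simp
  ultimately show ?thesis using Q unfolding unitary_mat_def by auto
qed

lemma unitary_mat_cancel:
  assumes W: "unitary_mat n W" and X: "X \<in> carrier_mat n n"
  shows "W * (ctrans W * X) = X" "ctrans W * (W * X) = X"
proof -
  have Wc: "W \<in> carrier_mat n n" using W unitary_mat_carrier by auto
  have "W * (ctrans W * X) = (W * ctrans W) * X"
    using Wc X by (simp add: assoc_mult_mat[of _ n n _ n _ n])
  then show "W * (ctrans W * X) = X" using W X unfolding unitary_mat_def by simp
  have "ctrans W * (W * X) = (ctrans W * W) * X"
    using Wc X by (simp add: assoc_mult_mat[of _ n n _ n _ n])
  then show "ctrans W * (W * X) = X" using W X unfolding unitary_mat_def by simp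
qed

lemma unitary_mat_mult:
  assumes P: "unitary_mat n P" and R: "unitary_mat n R"
  shows "unitary_mat n (P * R)"
proof -
  have Pc: "P \<in> carrier_mat n n" and Rc: "R \<in> carrier_mat n n" using P R unitary_mat_carrier by auto
  have "ctrans (P * R) * (P * R) = ctrans R * (ctrans P * (P * R))"
    using Pc Rc by (simp add: ctrans_mult[OF Pc Rc] assoc_mult_mat[of _ n n _ n _ n])
  also have "\<dots> = 1\<^sub>m n" using P R Rc unfolding unitary_mat_cancel(2)[OF P Rc] unitary_mat_def by simp
  finally show ?thesis
    using Pc Rc mat_mult_left_right_inverse[of "ctrans (P * R)" n "P * R"] unfolding unitary_mat_def
    by auto
qed

definition unitary_diag :: "nat \<Rightarrow> complex mat \<Rightarrow> (nat \<Rightarrow> complex) \<Rightarrow> complex mat" where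
  "unitary_diag n Q d = Q * mat_diag n d * ctrans Q"

lemma unitary_diag_carrier [simp]: "Q \<in> carrier_mat n n \<Longrightarrow> unitary_diag n Q d \<in> carrier_mat n n"
  unfolding unitary_diag_def by auto

lemma unitary_diag_dim [simp]:
  "Q \<in> carrier_mat n n \<Longrightarrow> dim_row (unitary_diag n Q d) = n"
  "Q \<in> carrier_mat n n \<Longrightarrow> dim_col (unitary_diag n Q d) = n"
  unfolding unitary_diag_def by auto

lemma index_unitary_diag:
  assumes Q: "Q \<in> carrier_mat n n" and "a < n" "b < n"
  shows "unitary_diag n Q d $$ (a,b) = (\<Sum>j<n. Q $$ (a,j) * d j * cnj (Q $$ (b,j)))"
proof -
  have "unitary_diag n Q d = Matrix.mat n n (\<lambda>(i,j). Q $$ (i,j) * d j) * ctrans Q"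
    unfolding unitary_diag_def by (simp add: mat_diag_mult_right[OF Q])
  also have "\<dots> $$ (a,b) = (\<Sum>j<n. Q $$ (a,j) * d j * cnj (Q $$ (b,j)))"
    using assms by (subst index_mult_mat_sum[of _ n n _ n]) auto
  finally show ?thesis .
qed

lemma unitary_diag_add:
  "Q \<in> carrier_mat n n \<Longrightarrow> unitary_diag n Q d1 + unitary_diag n Q d2 = unitary_diag n Q (\<lambda>j. d1 j + d2 j)"
  by (rule eq_matI) (auto simp: index_unitary_diag sum.distrib algebra_simps)

lemma unitary_diag_minus:
  "Q \<in> carrier_mat n n \<Longrightarrow> unitary_diag n Q d1 - unitary_diag n Q d2 = unitary_diag n Q (\<lambda>j. d1 j - d2 j)"
  by (rule eq_matI) (auto simp: index_unitary_diag sum_subtractf algebra_simps)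

lemma unitary_diag_smult:
  "Q \<in> carrier_mat n n \<Longrightarrow> c \<cdot>\<^sub>m unitary_diag n Q d = unitary_diag n Q (\<lambda>j. c * d j)"
  by (rule eq_matI) (auto simp: index_unitary_diag sum_distrib_left algebra_simps)

lemma unitary_diag_zero: "Q \<in> carrier_mat n n \<Longrightarrow> unitary_diag n Q (\<lambda>j. 0) = 0\<^sub>m n n"
  by (rule eq_matI) (auto simp: index_unitary_diag)


section \<open>The spectral theorem for normal matrices\<close>

lemma exists_corthogonal_basis_extending:
  fixes v :: "complex Matrix.vec"
  assumes v: "v \<in> carrier_vec n" and v0: "v \<noteq> 0\<^sub>v n"
  shows "\<exists>ws. set ws \<subseteq> carrier_vec n \<and> corthogonal ws \<and> length ws = n \<and> ws ! 0 = v"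
proof -
  interpret cof_vec_space n "TYPE(complex)" .
  define b where "b = basis_completion v"
  from basis_completion[OF v v0, folded b_def]
  have b: "set b \<subseteq> carrier_vec n" "distinct b" "\<not> lin_dep (set b)" "length b = n" "hd b = v" by auto
  then have "n > 0" using v v0 by (cases n) auto
  with b obtain vs where bv: "b = v # vs" by (cases b) auto
  define ws where "ws = gram_schmidt n b"
  from gram_schmidt_result[OF b(1-3) refl, folded ws_def]
  have ws: "set ws \<subseteq> carrier_vec n" "corthogonal ws" "length ws = n" by (auto simp: b(4))
  have "hd ws = v" unfolding ws_def bv using gram_schmidt_hd[OF v] by simp
  then have "ws ! 0 = v" using ws(3) \<open>n > 0\<close> by (metis hd_conv_nth list.size(3) less_irrefl)
  with ws show ?thesis by blast
qed

lemma unitary_mat_normalized_cols: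
  fixes ws :: "complex Matrix.vec list"
  assumes ws: "set ws \<subseteq> carrier_vec n" "corthogonal ws" "length ws = n"
  shows "unitary_mat n (Matrix.mat n n (\<lambda>(a,j). ws ! j $ a / complex_of_real (vnorm (ws ! j))))"
    (is "unitary_mat n ?W")
proof (rule unitary_matI)
  have wsc: "ws ! j \<in> carrier_vec n" if "j < n" for j using ws that by auto
  have orth: "(\<Sum>a<n. ws ! l $ a * cnj (ws ! j $ a)) = 0 \<longleftrightarrow> l \<noteq> j" if "j < n" "l < n" for j l
    using corthogonalD[OF ws(2), of l j] that ws(3) wsc[OF that(1)] wsc[OF that(2)]
    by (auto simp: scalar_prod_def lessThan_atLeast0)
  have norm_sq: "complex_of_real ((vnorm (ws ! j))\<^sup>2) = (\<Sum>a<n. ws ! j $ a * cnj (ws ! j $ a))" if "j < n" for j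
    using wsc[OF that] by (simp add: vnorm_def sum_nonneg complex_mult_cnj_cmod)
  have norm_pos: "vnorm (ws ! j) > 0" if "j < n" for j
  proof -
    have "vnorm (ws ! j) \<noteq> 0" using orth[OF that that] norm_sq[OF that] by auto
    then show ?thesis unfolding vnorm_def by (simp add: sum_nonneg order_less_le)
  qed
  fix j l assume j: "j < n" and l: "l < n"
  have "(\<Sum>a<n. cnj (?W $$ (a,j)) * ?W $$ (a,l)) = (\<Sum>a<n. ws ! l $ a * cnj (ws ! j $ a))
      / (complex_of_real (vnorm (ws ! j)) * complex_of_real (vnorm (ws ! l)))"
    using j l by (simp add: sum_divide_distrib mult.commute)
  also have "\<dots> = of_bool (j = l)"
  proof (cases "j = l")
    case True
    then show ?thesis using norm_sq[OF j, symmetric] norm_pos[OF j] by (simp add: power2_eq_square)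
  qed (use orth[OF j l] in simp)
  finally show "(\<Sum>a<n. cnj (?W $$ (a,j)) * ?W $$ (a,l)) = of_bool (j = l)" .
qed simp

lemma exists_unitary_eigenvector_col:
  assumes A: "A \<in> carrier_mat n n" and ev: "eigenvector A v e"
  shows "\<exists>W. unitary_mat n W \<and> (\<forall>a<n. (\<Sum>b<n. A $$ (a,b) * W $$ (b,0)) = e * W $$ (a,0))"
proof -
  from ev A have v: "v \<in> carrier_vec n" and v0: "v \<noteq> 0\<^sub>v n" and Av: "A *\<^sub>v v = e \<cdot>\<^sub>v v"
    unfolding eigenvector_def by auto
  obtain ws where ws: "set ws \<subseteq> carrier_vec n" "corthogonal ws" "length ws = n" and ws0: "ws ! 0 = v"
    using exists_corthogonal_basis_extending[OF v v0] by blast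
  define W where "W = Matrix.mat n n (\<lambda>(a,j). ws ! j $ a / complex_of_real (vnorm (ws ! j)))"
  have "(\<Sum>b<n. A $$ (a,b) * W $$ (b,0)) = e * W $$ (a,0)" if a: "a < n" for a
  proof -
    have "(\<Sum>b<n. A $$ (a,b) * W $$ (b,0)) = (A *\<^sub>v v) $ a / complex_of_real (vnorm v)"
      unfolding W_def using a ws0 index_mult_mat_vec_sum[OF A v a] by (simp add: sum_divide_distrib)
    then show ?thesis unfolding W_def using a ws0 Av v by simp
  qed
  with unitary_mat_normalized_cols[OF ws] show ?thesis unfolding W_def by blast
qed

lemma exists_unitary_deflation:
  assumes A: "A \<in> carrier_mat n n" and n: "n > 0" and ev: "eigenvalue A e"
  shows "\<exists>W. unitary_mat n W \<and> (\<forall>a<n. (ctrans W * A * W) $$ (a,0) = (if a = 0 then e else 0))"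
proof -
  obtain v where "eigenvector A v e" using ev unfolding eigenvalue_def by auto
  from exists_unitary_eigenvector_col[OF A this] obtain W where W: "unitary_mat n W"
    and Wev: "\<And>a. a < n \<Longrightarrow> (\<Sum>b<n. A $$ (a,b) * W $$ (b,0)) = e * W $$ (a,0)" by auto
  have Wc: "W \<in> carrier_mat n n" using W unitary_mat_carrier by auto
  have "(ctrans W * A * W) $$ (a,0) = (if a = 0 then e else 0)" if a: "a < n" for a
  proof -
    have "(ctrans W * A * W) $$ (a,0) = (\<Sum>b<n. ctrans W $$ (a,b) * (A * W) $$ (b,0))"
      using A Wc a n by (simp add: assoc_mult_mat[of _ n n _ n _ n] index_mult_mat_sum[of _ n n _ n]
          del: index_mult_mat)
    also have "\<dots> = e * (\<Sum>b<n. cnj (W $$ (b,a)) * W $$ (b,0))"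
      using A Wc a n Wev by (simp add: index_mult_mat_sum[of _ n n _ n] sum_distrib_left algebra_simps
          del: index_mult_mat)
    also have "\<dots> = (if a = 0 then e else 0)" using unitary_mat_cols[OF W a n] by simp
    finally show ?thesis .
  qed
  with W show ?thesis by blast
qed

lemma normal_mat_unitary_conj:
  assumes N: "normal_mat n A" and W: "unitary_mat n W"
  shows "normal_mat n (ctrans W * A * W)"
proof -
  have A: "A \<in> carrier_mat n n" and AA: "A * ctrans A = ctrans A * A"
    using N unfolding normal_mat_def by auto
  have Wc: "W \<in> carrier_mat n n" using W unitary_mat_carrier by auto
  let ?B = "ctrans W * A * W"
  have cB: "ctrans ?B = ctrans W * ctrans A * W"
    using A Wc by (simp add: ctrans_mult[of _ n n _ n] assoc_mult_mat[of _ n n _ n _ n])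
  have "?B * ctrans ?B = ctrans W * (A * ctrans A) * W" "ctrans ?B * ?B = ctrans W * (ctrans A * A) * W"
    unfolding cB using A Wc by (simp_all add: assoc_mult_mat[of _ n n _ n _ n] unitary_mat_cancel[OF W])
  then show ?thesis unfolding normal_mat_def using A Wc AA by simp
qed

text \<open>Deflation: by normality, the row belonging to an eigenvector column vanishes as well.\<close>

definition lower_block :: "nat \<Rightarrow> complex mat \<Rightarrow> complex mat" where
  "lower_block m A = Matrix.mat m m (\<lambda>(i,j). A $$ (Suc i, Suc j))"

lemma normal_mat_first_row:
  assumes N: "normal_mat (Suc m) A" and col: "\<And>a. a < Suc m \<Longrightarrow> A $$ (a,0) = (if a = 0 then e else 0)"
    and l: "l < m"
  shows "A $$ (0, Suc l) = 0"
proof -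
  have A: "A \<in> carrier_mat (Suc m) (Suc m)" and AA: "A * ctrans A = ctrans A * A"
    using N unfolding normal_mat_def by auto
  \<comment> \<open>compare the \<open>(0,0)\<close> entries of \<open>A A\<^sup>H\<close> and \<open>A\<^sup>H A\<close>\<close>
  have "(\<Sum>j<Suc m. A $$ (0,j) * cnj (A $$ (0,j))) = (A * ctrans A) $$ (0,0)"
    using A by (simp add: index_mult_mat_sum[of _ "Suc m" "Suc m" _ "Suc m"] del: index_mult_mat)
  also have "\<dots> = (\<Sum>j<Suc m. cnj (A $$ (j,0)) * A $$ (j,0))"
    using A AA by (simp add: index_mult_mat_sum[of _ "Suc m" "Suc m" _ "Suc m"] del: index_mult_mat)
  also have "\<dots> = e * cnj e"
    using col by (simp add: sum.lessThan_Suc_shift del: sum.lessThan_Suc)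
  finally have "(\<Sum>j<m. A $$ (0, Suc j) * cnj (A $$ (0, Suc j))) = 0"
    using col[of 0] by (simp add: sum.lessThan_Suc_shift del: sum.lessThan_Suc)
  then have "complex_of_real (\<Sum>j<m. (cmod (A $$ (0, Suc j)))\<^sup>2) = 0"
    by (simp only: of_real_sum complex_norm_square)
  then show ?thesis using l by (simp add: sum_nonneg_eq_0_iff del: of_real_sum)
qed

lemma normal_mat_lower_block:
  assumes N: "normal_mat (Suc m) A" and col: "\<And>a. a < Suc m \<Longrightarrow> A $$ (a,0) = (if a = 0 then e else 0)"
  shows "normal_mat m (lower_block m A)"
proof -
  have A: "A \<in> carrier_mat (Suc m) (Suc m)" and AA: "A * ctrans A = ctrans A * A"
    using N unfolding normal_mat_def by auto
  note row = normal_mat_first_row[OF N col]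
  define B where "B = lower_block m A"
  have Bc: "B \<in> carrier_mat m m" unfolding B_def lower_block_def by auto
  have "B * ctrans B = ctrans B * B"
  proof (rule eq_matI)
    fix i j assume "i < dim_row (ctrans B * B)" "j < dim_col (ctrans B * B)"
    then have i: "i < m" and j: "j < m" using Bc by auto
    \<comment> \<open>the first column and row of \<open>A\<close> do not contribute to entries of the lower block\<close>
    have "(B * ctrans B) $$ (i,j) = (\<Sum>l<m. A $$ (Suc i, Suc l) * cnj (A $$ (Suc j, Suc l)))"
      using Bc i j by (simp add: index_mult_mat_sum[of _ m m _ m] B_def lower_block_def del: index_mult_mat)
    also have "\<dots> = (\<Sum>l<Suc m. A $$ (Suc i, l) * cnj (A $$ (Suc j, l)))"
      using i j col by (simp add: sum.lessThan_Suc_shift del: sum.lessThan_Suc)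
    also have "\<dots> = (A * ctrans A) $$ (Suc i, Suc j)"
      using A i j by (simp add: index_mult_mat_sum[of _ "Suc m" "Suc m" _ "Suc m"] del: index_mult_mat)
    finally have BB: "(B * ctrans B) $$ (i,j) = (A * ctrans A) $$ (Suc i, Suc j)" .
    have "(ctrans B * B) $$ (i,j) = (\<Sum>l<m. cnj (A $$ (Suc l, Suc i)) * A $$ (Suc l, Suc j))"
      using Bc i j by (simp add: index_mult_mat_sum[of _ m m _ m] B_def lower_block_def del: index_mult_mat)
    also have "\<dots> = (\<Sum>l<Suc m. cnj (A $$ (l, Suc i)) * A $$ (l, Suc j))"
      using i j row by (simp add: sum.lessThan_Suc_shift del: sum.lessThan_Suc)
    also have "\<dots> = (ctrans A * A) $$ (Suc i, Suc j)"
      using A i j by (simp add: index_mult_mat_sum[of _ "Suc m" "Suc m" _ "Suc m"] del: index_mult_mat)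
    finally have "(ctrans B * B) $$ (i,j) = (ctrans A * A) $$ (Suc i, Suc j)" .
    with BB show "(B * ctrans B) $$ (i,j) = (ctrans B * B) $$ (i,j)" using AA by simp
  qed (use Bc in auto)
  then show ?thesis unfolding normal_mat_def B_def[symmetric] using Bc by auto
qed

text \<open>The block diagonal matrix \<open>diag(1, Q)\<close>.\<close>

definition one_block :: "nat \<Rightarrow> complex mat \<Rightarrow> complex mat" where
  "one_block m Q = Matrix.mat (Suc m) (Suc m) (\<lambda>(i,j). case i of
     0 \<Rightarrow> of_bool (j = 0) | Suc i' \<Rightarrow> (case j of 0 \<Rightarrow> 0 | Suc j' \<Rightarrow> Q $$ (i',j')))"

lemma one_block_carrier [simp]: "one_block m Q \<in> carrier_mat (Suc m) (Suc m)"
  by (simp add: one_block_def)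

lemma index_one_block [simp]:
  "one_block m Q $$ (0,0) = 1"
  "j < m \<Longrightarrow> one_block m Q $$ (0, Suc j) = 0"
  "i < m \<Longrightarrow> one_block m Q $$ (Suc i, 0) = 0"
  "i < m \<Longrightarrow> j < m \<Longrightarrow> one_block m Q $$ (Suc i, Suc j) = Q $$ (i,j)"
  by (simp_all add: one_block_def)

lemma unitary_mat_one_block:
  assumes Q: "unitary_mat m Q"
  shows "unitary_mat (Suc m) (one_block m Q)"
proof (rule unitary_matI)
  fix j l assume "j < Suc m" "l < Suc m"
  then show "(\<Sum>a<Suc m. cnj (one_block m Q $$ (a,j)) * one_block m Q $$ (a,l)) = of_bool (j = l)"
    using unitary_mat_cols[OF Q]
    by (cases j; cases l) (simp_all add: sum.lessThan_Suc_shift del: sum.lessThan_Suc)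
qed simp

lemma unitary_diag_one_block:
  assumes A: "A \<in> carrier_mat (Suc m) (Suc m)" and Q: "Q \<in> carrier_mat m m"
    and col: "\<And>a. a < Suc m \<Longrightarrow> A $$ (a,0) = (if a = 0 then e else 0)"
    and row: "\<And>l. l < m \<Longrightarrow> A $$ (0, Suc l) = 0"
    and B: "lower_block m A = unitary_diag m Q lam"
  shows "A = unitary_diag (Suc m) (one_block m Q) (case_nat e lam)"
proof (rule eq_matI)
  fix a b assume "a < dim_row (unitary_diag (Suc m) (one_block m Q) (case_nat e lam))"
    "b < dim_col (unitary_diag (Suc m) (one_block m Q) (case_nat e lam))"
  then have ab: "a < Suc m" "b < Suc m" by simp_all
  have Q': "one_block m Q \<in> carrier_mat (Suc m) (Suc m)" by simp
  have lower: "A $$ (Suc a', Suc b') = (\<Sum>j<m. Q $$ (a',j) * lam j * cnj (Q $$ (b',j)))"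
    if "a' < m" "b' < m" for a' b'
    using arg_cong[OF B, of "\<lambda>M. M $$ (a',b')"] that index_unitary_diag[OF Q that]
    by (simp add: lower_block_def)
  show "A $$ (a,b) = unitary_diag (Suc m) (one_block m Q) (case_nat e lam) $$ (a,b)"
    unfolding index_unitary_diag[OF Q' ab] using ab col row lower
    by (cases a; cases b) (simp_all add: sum.lessThan_Suc_shift del: sum.lessThan_Suc)
qed (use A in simp_all)

theorem normal_mat_unitary_diag:
  "normal_mat n A \<Longrightarrow> \<exists>Q lam. unitary_mat n Q \<and> A = unitary_diag n Q lam"
proof (induction n arbitrary: A)
  case 0
  then have "A = unitary_diag 0 (1\<^sub>m 0) (\<lambda>_. 0)"
    by (intro eq_matI) (auto simp: normal_mat_def unitary_diag_def)
  moreover have "unitary_mat 0 (1\<^sub>m 0)" by (rule unitary_matI) auto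
  ultimately show ?case by blast
next
  case (Suc m)
  have A: "A \<in> carrier_mat (Suc m) (Suc m)" using Suc.prems unfolding normal_mat_def by auto
  from spectrum_non_empty[OF A] obtain e where "eigenvalue A e" unfolding spectrum_def by auto
  from exists_unitary_deflation[OF A _ this] obtain W where W: "unitary_mat (Suc m) W"
    and col: "\<And>a. a < Suc m \<Longrightarrow> (ctrans W * A * W) $$ (a,0) = (if a = 0 then e else 0)" by auto
  have Wc: "W \<in> carrier_mat (Suc m) (Suc m)" using W unitary_mat_carrier by auto
  define A' where "A' = ctrans W * A * W"
  have N': "normal_mat (Suc m) A'" unfolding A'_def by (rule normal_mat_unitary_conj[OF Suc.prems W])
  from Suc.IH[OF normal_mat_lower_block[OF N' col[folded A'_def]]]
  obtain Q lam where Q: "unitary_mat m Q" and B: "lower_block m A' = unitary_diag m Q lam" by blast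
  have A'_eq: "A' = unitary_diag (Suc m) (one_block m Q) (case_nat e lam)"
    using unitary_diag_one_block[OF _ unitary_mat_carrier[OF Q] col[folded A'_def]
        normal_mat_first_row[OF N' col[folded A'_def]] B] N' unfolding normal_mat_def by blast
  have "A = W * A' * ctrans W"
    unfolding A'_def using A Wc W
    by (simp add: assoc_mult_mat[of _ "Suc m" "Suc m" _ "Suc m" _ "Suc m"] unitary_mat_cancel
        unitary_mat_def)
  also have "\<dots> = unitary_diag (Suc m) (W * one_block m Q) (case_nat e lam)"
    unfolding A'_eq unitary_diag_def using Wc
    by (simp add: one_block_def ctrans_mult[of _ "Suc m" "Suc m" _ "Suc m"]
        assoc_mult_mat[of _ "Suc m" "Suc m" _ "Suc m" _ "Suc m"])
  finally show ?case using unitary_mat_mult[OF W unitary_mat_one_block[OF Q]] by blast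
qed


section \<open>Matrix functions of normal matrices\<close>

text \<open>\<open>D U = U D'\<close> for diagonal \<open>D, D'\<close> means \<open>U\<close> only links equal diagonal entries, so the
  same holds after applying \<open>g\<close> to them.\<close>

lemma unitary_diag_fun_eq:
  assumes Q: "unitary_mat n Q" and Q': "unitary_mat n Q'"
    and eq: "unitary_diag n Q lam = unitary_diag n Q' lam'"
  shows "unitary_diag n Q (\<lambda>i. g (lam i)) = unitary_diag n Q' (\<lambda>i. g (lam' i))"
proof -
  have Qc: "Q \<in> carrier_mat n n" and Q'c: "Q' \<in> carrier_mat n n" using Q Q' unitary_mat_carrier by auto
  define U where "U = ctrans Q * Q'"
  have Uc: "U \<in> carrier_mat n n" unfolding U_def using Qc Q'c by simp
  have assoc: "\<And>A B C. A \<in> carrier_mat n n \<Longrightarrow> B \<in> carrier_mat n n \<Longrightarrow> C \<in> carrier_mat n n \<Longrightarrow>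
      A * B * C = A * (B * C)" by (rule assoc_mult_mat)
  have split: "unitary_diag n Q d = Q * (mat_diag n d * U) * ctrans Q'"
    "unitary_diag n Q' d = Q * (U * mat_diag n d) * ctrans Q'" for d
    unfolding unitary_diag_def U_def using Qc Q'c
    by (simp_all add: assoc unitary_mat_cancel[OF Q] unitary_mat_cancel[OF Q'] unitary_mat_inverse[OF Q'])
  have "ctrans Q * (unitary_diag n Q lam * Q') = mat_diag n lam * U"
    "ctrans Q * (unitary_diag n Q' lam' * Q') = U * mat_diag n lam'"
    unfolding split using Qc Q'c Uc
    by (simp_all add: assoc unitary_mat_cancel[OF Q] unitary_mat_cancel[OF Q'] unitary_mat_inverse[OF Q']
        right_mult_one_mat[OF mat_diag_dim])
  then have DU: "mat_diag n lam * U = U * mat_diag n lam'" using eq by simp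
  have "mat_diag n (\<lambda>i. g (lam i)) * U = U * mat_diag n (\<lambda>i. g (lam' i))"
  proof (rule eq_matI)
    fix i j assume "i < dim_row (U * mat_diag n (\<lambda>i. g (lam' i)))" "j < dim_col (U * mat_diag n (\<lambda>i. g (lam' i)))"
    then have i: "i < n" and j: "j < n" using Uc by (auto simp: mat_diag_def)
    have "lam i * U $$ (i,j) = U $$ (i,j) * lam' j"
      using arg_cong[OF DU, of "\<lambda>M. M $$ (i,j)"] Uc i j
      by (simp add: mat_diag_mult_left[OF Uc] mat_diag_mult_right[OF Uc])
    then have "g (lam i) * U $$ (i,j) = U $$ (i,j) * g (lam' j)"
      by (cases "U $$ (i,j) = 0") auto
    then show "(mat_diag n (\<lambda>i. g (lam i)) * U) $$ (i,j) = (U * mat_diag n (\<lambda>i. g (lam' i))) $$ (i,j)"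
      using Uc i j by (simp add: mat_diag_mult_left[OF Uc] mat_diag_mult_right[OF Uc])
  qed (use Uc in \<open>auto simp: mat_diag_def\<close>)
  then show ?thesis unfolding split by simp
qed

lemma matfun_unitary_diag:
  assumes Q: "unitary_mat n Q" and A: "A = unitary_diag n Q lam"
  shows "matfun g A = unitary_diag n Q (\<lambda>i. g (lam i))"
proof -
  have dA: "dim_row A = n" using A unitary_mat_carrier[OF Q] by simp
  let ?P = "\<lambda>M. \<exists>Q lam. unitary_mat (dim_row A) Q \<and> A = Q * mat_diag (dim_row A) lam * ctrans Q \<and>
      M = Q * mat_diag (dim_row A) (\<lambda>i. g (lam i)) * ctrans Q"
  have "?P (unitary_diag n Q (\<lambda>i. g (lam i)))"
    unfolding dA using Q A by (auto simp: unitary_diag_def)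
  then have "?P (matfun g A)" unfolding matfun_def by (rule someI)
  then obtain Q1 lam1 where Q1: "unitary_mat n Q1" "A = unitary_diag n Q1 lam1"
    "matfun g A = unitary_diag n Q1 (\<lambda>i. g (lam1 i))" unfolding unitary_diag_def dA by auto
  show ?thesis unfolding Q1(3) by (rule unitary_diag_fun_eq[OF Q1(1) Q]) (use Q1 A in simp)
qed

lemma pmat_unitary_diag:
  assumes Q: "unitary_mat n Q" and A: "A = unitary_diag n Q lam"
  shows "pmat k alpha phi A = unitary_diag n Q (\<lambda>j. \<Sum>i<k. alpha i * phi i (lam j))"
proof (induction k)
  case 0
  show ?case using A unitary_mat_carrier[OF Q] by (simp add: unitary_diag_zero)
next
  case (Suc k)
  then show ?case using matfun_unitary_diag[OF Q A, of "phi k"] unitary_mat_carrier[OF Q]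
    by (simp add: unitary_diag_smult unitary_diag_add algebra_simps)
qed


section \<open>Coordinates with respect to an orthonormal basis\<close>

lemma sum_cmod_sq_unitary:
  fixes U :: "nat \<Rightarrow> nat \<Rightarrow> complex"
  assumes cols: "\<And>j l. j < n \<Longrightarrow> l < n \<Longrightarrow> (\<Sum>a<n. cnj (U a j) * U a l) = of_bool (j = l)"
  shows "(\<Sum>a<n. (cmod (\<Sum>j<n. U a j * y j))\<^sup>2) = (\<Sum>j<n. (cmod (y j))\<^sup>2)"
proof -
  have "complex_of_real (\<Sum>a<n. (cmod (\<Sum>j<n. U a j * y j))\<^sup>2)
      = (\<Sum>a<n. (\<Sum>j<n. U a j * y j) * cnj (\<Sum>l<n. U a l * y l))"
    by (simp only: of_real_sum complex_norm_square)
  also have "\<dots> = (\<Sum>a<n. \<Sum>l<n. \<Sum>j<n. y j * cnj (y l) * (U a j * cnj (U a l)))"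
    by (simp add: sum_distrib_left sum_distrib_right cnj_sum algebra_simps)
  also have "\<dots> = (\<Sum>l<n. \<Sum>a<n. \<Sum>j<n. y j * cnj (y l) * (U a j * cnj (U a l)))"
    by (rule sum.swap)
  also have "\<dots> = (\<Sum>l<n. \<Sum>j<n. \<Sum>a<n. y j * cnj (y l) * (U a j * cnj (U a l)))"
    by (rule sum.cong[OF refl], rule sum.swap)
  also have "\<dots> = (\<Sum>l<n. \<Sum>j<n. y j * cnj (y l) * cnj (\<Sum>a<n. cnj (U a j) * U a l))"
    by (simp add: sum_distrib_left cnj_sum mult.commute)
  also have "\<dots> = (\<Sum>l<n. \<Sum>j<n. y j * cnj (y l) * of_bool (j = l))"
    using cols by (intro sum.cong refl) simp
  also have "\<dots> = complex_of_real (\<Sum>j<n. (cmod (y j))\<^sup>2)"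
    by (simp only: of_real_sum complex_norm_square) simp
  finally show ?thesis by (simp only: of_real_eq_iff)
qed

text \<open>\<open>col_coord n Q v\<close> is \<open>Q\<^sup>H v\<close>, the coordinate vector of \<open>v\<close> in the basis formed by the columns of \<open>Q\<close>.\<close>

definition col_coord :: "nat \<Rightarrow> complex mat \<Rightarrow> complex Matrix.vec \<Rightarrow> nat \<Rightarrow> complex" where
  "col_coord n Q v j = (\<Sum>b<n. cnj (Q $$ (b,j)) * v $ b)"

lemma vnorm_carrier: "v \<in> carrier_vec n \<Longrightarrow> vnorm v = sqrt (\<Sum>a<n. (cmod (v $ a))\<^sup>2)"
  unfolding vnorm_def by auto

lemma sum_cmod_sq_col_coord:
  assumes Q: "unitary_mat n Q" and v: "v \<in> carrier_vec n"
  shows "(\<Sum>j<n. (cmod (col_coord n Q v j))\<^sup>2) = (\<Sum>b<n. (cmod (v $ b))\<^sup>2)"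
  unfolding col_coord_def using unitary_mat_rows[OF Q]
  by (intro sum_cmod_sq_unitary[of n "\<lambda>j b. cnj (Q $$ (b,j))"]) simp

lemma unitary_diag_mult_vec:
  assumes Q: "Q \<in> carrier_mat n n" and v: "v \<in> carrier_vec n" and a: "a < n"
  shows "(unitary_diag n Q d *\<^sub>v v) $ a = (\<Sum>j<n. Q $$ (a,j) * (d j * col_coord n Q v j))"
proof -
  have "(unitary_diag n Q d *\<^sub>v v) $ a = (\<Sum>b<n. \<Sum>j<n. Q $$ (a,j) * d j * cnj (Q $$ (b,j)) * v $ b)"
    using Q v a by (simp add: index_mult_mat_vec_sum[of _ n n] index_unitary_diag sum_distrib_right
        del: index_mult_mat_vec)
  also have "\<dots> = (\<Sum>j<n. Q $$ (a,j) * (d j * col_coord n Q v j))"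
    unfolding col_coord_def by (subst sum.swap) (simp add: sum_distrib_left algebra_simps)
  finally show ?thesis .
qed

lemma vnorm_unitary_diag_mult_vec:
  assumes Q: "unitary_mat n Q" and v: "v \<in> carrier_vec n"
  shows "vnorm (unitary_diag n Q d *\<^sub>v v) = sqrt (\<Sum>j<n. (cmod (d j))\<^sup>2 * (cmod (col_coord n Q v j))\<^sup>2)"
proof -
  have Qc: "Q \<in> carrier_mat n n" using Q unitary_mat_carrier by auto
  have "unitary_diag n Q d *\<^sub>v v \<in> carrier_vec n"
    using mult_mat_vec_carrier[OF unitary_diag_carrier[OF Qc] v] .
  then have "vnorm (unitary_diag n Q d *\<^sub>v v) =
      sqrt (\<Sum>a<n. (cmod (\<Sum>j<n. Q $$ (a,j) * (d j * col_coord n Q v j)))\<^sup>2)"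
    by (simp add: vnorm_carrier unitary_diag_mult_vec[OF Qc v])
  also have "(\<Sum>a<n. (cmod (\<Sum>j<n. Q $$ (a,j) * (d j * col_coord n Q v j)))\<^sup>2)
      = (\<Sum>j<n. (cmod (d j * col_coord n Q v j))\<^sup>2)"
    by (rule sum_cmod_sq_unitary[of n "\<lambda>a j. Q $$ (a,j)"]) (rule unitary_mat_cols[OF Q])
  finally show ?thesis by (simp add: norm_mult power_mult_distrib)
qed

lemma col_coord_unitary_diag_mult_vec:
  assumes Q: "unitary_mat n Q" and v: "v \<in> carrier_vec n" and j: "j < n"
  shows "col_coord n Q (unitary_diag n Q d *\<^sub>v v) j = d j * col_coord n Q v j"
proof -
  have Qc: "Q \<in> carrier_mat n n" using Q unitary_mat_carrier by auto
  have "col_coord n Q (unitary_diag n Q d *\<^sub>v v) j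
      = (\<Sum>l<n. (\<Sum>b<n. cnj (Q $$ (b,j)) * Q $$ (b,l)) * (d l * col_coord n Q v l))"
    unfolding col_coord_def[of n Q "unitary_diag n Q d *\<^sub>v v"]
    by (simp add: unitary_diag_mult_vec[OF Qc v] sum_distrib_left sum_distrib_right algebra_simps)
      (subst sum.swap, simp add: algebra_simps)
  also have "\<dots> = d j * col_coord n Q v j"
    using j by (simp add: unitary_mat_cols[OF Q j])
  finally show ?thesis .
qed


section \<open>Eigenvalues\<close>

lemma eigenvalue_unitary_diag_iff:
  assumes Q: "unitary_mat n Q" and A: "A = unitary_diag n Q lam"
  shows "eigenvalue A mu \<longleftrightarrow> mu \<in> lam ` {..<n}"
proof
  have Qc: "Q \<in> carrier_mat n n" using Q unitary_mat_carrier by auto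
  assume "eigenvalue A mu"
  then obtain u where u: "u \<in> carrier_vec n" "u \<noteq> 0\<^sub>v n" "A *\<^sub>v u = mu \<cdot>\<^sub>v u"
    using A Qc unfolding eigenvalue_def eigenvector_def by auto
  \<comment> \<open>some coordinate of \<open>u\<close> is non-zero, and on it \<open>A\<close> acts as multiplication by both \<open>lam j\<close> and \<open>mu\<close>\<close>
  obtain b where b: "b < n" "u $ b \<noteq> 0"
    using u(1,2) by (metis carrier_vecD eq_vecI index_zero_vec(1,2))
  have "(\<Sum>j<n. (cmod (col_coord n Q u j))\<^sup>2) > 0"
    unfolding sum_cmod_sq_col_coord[OF Q u(1)] using b by (intro sum_pos2[of _ b]) auto
  then obtain j where j: "j < n" "col_coord n Q u j \<noteq> 0"
    by (metis (no_types, lifting) lessThan_iff norm_zero power_zero_numeral sum.neutral less_irrefl)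
  have "lam j * col_coord n Q u j = col_coord n Q (A *\<^sub>v u) j"
    using col_coord_unitary_diag_mult_vec[OF Q u(1) j(1), of lam] A by simp
  also have "\<dots> = mu * col_coord n Q u j"
    using u(1,3) by (simp add: col_coord_def sum_distrib_left algebra_simps)
  finally have "lam j * col_coord n Q u j = mu * col_coord n Q u j" .
  then show "mu \<in> lam ` {..<n}" using j by auto
next
  have Qc: "Q \<in> carrier_mat n n" using Q unitary_mat_carrier by auto
  assume "mu \<in> lam ` {..<n}"
  then obtain j0 where j0: "j0 < n" "mu = lam j0" by auto
  define u where "u = col Q j0"
  have uc: "u \<in> carrier_vec n" unfolding u_def using Qc by (simp add: carrier_vecI)
  have coord: "col_coord n Q u j = of_bool (j = j0)" if "j < n" for j
    unfolding col_coord_def u_def using unitary_mat_cols[OF Q that j0(1)] Qc j0 by simp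
  have "A *\<^sub>v u = lam j0 \<cdot>\<^sub>v u"
  proof (rule eq_vecI)
    fix a assume "a < dim_vec (lam j0 \<cdot>\<^sub>v u)"
    then have a: "a < n" using uc by simp
    have "(A *\<^sub>v u) $ a = (\<Sum>j<n. Q $$ (a,j) * (lam j * of_bool (j = j0)))"
      unfolding A unitary_diag_mult_vec[OF Qc uc a] using coord by simp
    also have "\<dots> = (lam j0 \<cdot>\<^sub>v u) $ a" using j0 a Qc by (simp add: u_def of_bool_def if_distrib cong: if_cong)
    finally show "(A *\<^sub>v u) $ a = (lam j0 \<cdot>\<^sub>v u) $ a" .
  qed (use uc A Qc in simp)
  moreover have "u \<noteq> 0\<^sub>v n" using coord[OF j0(1)] unfolding col_coord_def by auto
  ultimately show "eigenvalue A mu" unfolding eigenvalue_def eigenvector_def using uc A Qc j0 by auto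
qed

lemma eigenvalue_cnj_real_mat:
  assumes A: "A \<in> carrier_mat n n" and real: "\<forall>i<n. \<forall>j<n. A $$ (i,j) \<in> \<real>"
    and ev: "eigenvalue A mu"
  shows "eigenvalue A (cnj mu)"
proof -
  from ev A obtain u where u: "u \<in> carrier_vec n" "u \<noteq> 0\<^sub>v n" "A *\<^sub>v u = mu \<cdot>\<^sub>v u"
    unfolding eigenvalue_def eigenvector_def by auto
  have "A *\<^sub>v conjugate u = conjugate (A *\<^sub>v u)"
  proof (rule eq_vecI)
    fix a assume "a < dim_vec (conjugate (A *\<^sub>v u))"
    then have a: "a < n" using A by simp
    then show "(A *\<^sub>v conjugate u) $ a = conjugate (A *\<^sub>v u) $ a"
      using A u(1) real by (simp add: index_mult_mat_vec_sum[of _ n n] cnj_sum Reals_cnj_iff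
          del: index_mult_mat_vec)
  qed (use A in simp)
  then have "A *\<^sub>v conjugate u = cnj mu \<cdot>\<^sub>v conjugate u" using u(3) by (simp add: conjugate_smult_vec)
  then show ?thesis unfolding eigenvalue_def eigenvector_def using u A
    by (auto intro!: exI[of _ "conjugate u"])
qed


lemma cnj_eigenvalue_real_unitary_diag:
  assumes Q: "unitary_mat n Q" and A: "A = unitary_diag n Q lam"
    and real: "\<forall>i<n. \<forall>j<n. A $$ (i,j) \<in> \<real>" and mu: "mu \<in> lam ` {..<n}"
  shows "cnj mu \<in> lam ` {..<n}"
  using eigenvalue_cnj_real_mat[OF _ real] unitary_mat_carrier[OF Q] A eigenvalue_unitary_diag_iff[OF Q A] mu
  by simp


section \<open>Spectral projections\<close>

definition eigenproj :: "nat \<Rightarrow> complex mat \<Rightarrow> (nat \<Rightarrow> complex) \<Rightarrow> complex \<Rightarrow> complex mat" where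
  "eigenproj n Q lam mu = unitary_diag n Q (\<lambda>j. of_bool (lam j = mu))"

definition eigenweight :: "nat \<Rightarrow> complex mat \<Rightarrow> (nat \<Rightarrow> complex) \<Rightarrow> complex \<Rightarrow> nat \<Rightarrow> real" where
  "eigenweight n Q lam mu i = (\<Sum>j<n. of_bool (lam j = mu) * (cmod (Q $$ (i,j)))\<^sup>2)"

lemma index_eigenproj:
  "Q \<in> carrier_mat n n \<Longrightarrow> a < n \<Longrightarrow> b < n \<Longrightarrow>
    eigenproj n Q lam mu $$ (a,b) = (\<Sum>j<n. of_bool (lam j = mu) * (Q $$ (a,j) * cnj (Q $$ (b,j))))"
  unfolding eigenproj_def by (simp add: index_unitary_diag mult_ac)

lemma eigenproj_diag:
  "Q \<in> carrier_mat n n \<Longrightarrow> i < n \<Longrightarrow> eigenproj n Q lam mu $$ (i,i) = complex_of_real (eigenweight n Q lam mu i)"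
  unfolding eigenweight_def by (simp add: index_eigenproj of_real_sum complex_mult_cnj_cmod)

lemma eigenweight_eq:
  "eigenweight n Q lam mu i = (\<Sum>j\<in>{j\<in>{..<n}. lam j = mu}. (cmod (Q $$ (i,j)))\<^sup>2)"
  unfolding eigenweight_def by (subst sum.inter_filter, simp, rule sum.cong) auto

lemma eigenweight_nonneg: "eigenweight n Q lam mu i \<ge> 0"
  unfolding eigenweight_def by (auto intro: sum_nonneg)

lemma exists_eigenweight_pos:
  assumes Q: "unitary_mat n Q" and mu: "mu \<in> lam ` {..<n}"
  shows "\<exists>i<n. eigenweight n Q lam mu i > 0"
proof -
  from mu obtain j0 where j0: "j0 < n" "lam j0 = mu" by auto
  have "complex_of_real (\<Sum>i<n. (cmod (Q $$ (i,j0)))\<^sup>2) = 1"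
    using unitary_mat_cols[OF Q j0(1) j0(1)] by (simp add: complex_mult_cnj_cmod mult.commute)
  then obtain i where i: "i < n" "Q $$ (i,j0) \<noteq> 0"
    by (metis (no_types, lifting) lessThan_iff norm_zero of_real_0 power_zero_numeral sum.neutral zero_neq_one)
  have "(\<lambda>j. of_bool (lam j = mu) * (cmod (Q $$ (i,j)))\<^sup>2) j0 \<le> eigenweight n Q lam mu i"
    unfolding eigenweight_def by (rule member_le_sum) (use j0 in auto)
  then have "(cmod (Q $$ (i,j0)))\<^sup>2 \<le> eigenweight n Q lam mu i" using j0 by simp
  moreover have "(cmod (Q $$ (i,j0)))\<^sup>2 > 0" using i by simp
  ultimately show ?thesis using i(1) by (blast intro: order.strict_trans2)
qed

lemma matfun_indicator:
  assumes "unitary_mat n Q" and "A = unitary_diag n Q lam"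
  shows "matfun (\<lambda>x. of_bool (x = mu)) A = eigenproj n Q lam mu"
  using matfun_unitary_diag[OF assms] unfolding eigenproj_def by simp

text \<open>For a real matrix, \<open>A = Q diag(lam) Q\<^sup>H\<close> gives a second unitary diagonalisation
  \<open>A = conj(Q) diag(conj lam) conj(Q)\<^sup>H\<close>; comparing the two expressions of the matrix function
  \<open>[x = cnj mu]\<close> shows that conjugate eigenvalues have conjugate spectral projections.\<close>

definition mat_cnj :: "nat \<Rightarrow> complex mat \<Rightarrow> complex mat" where
  "mat_cnj n Q = Matrix.mat n n (\<lambda>(a,b). cnj (Q $$ (a,b)))"

lemma unitary_mat_cnj:
  assumes Q: "unitary_mat n Q"
  shows "unitary_mat n (mat_cnj n Q)"
proof (rule unitary_matI)
  fix j l assume j: "j < n" and l: "l < n"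
  have "(\<Sum>a<n. cnj (mat_cnj n Q $$ (a,j)) * mat_cnj n Q $$ (a,l)) = cnj (\<Sum>a<n. cnj (Q $$ (a,j)) * Q $$ (a,l))"
    unfolding mat_cnj_def using j l by (simp add: cnj_sum)
  then show "(\<Sum>a<n. cnj (mat_cnj n Q $$ (a,j)) * mat_cnj n Q $$ (a,l)) = of_bool (j = l)"
    using unitary_mat_cols[OF Q j l] by simp
qed (simp add: mat_cnj_def)

lemma index_unitary_diag_mat_cnj:
  assumes "Q \<in> carrier_mat n n" "a < n" "b < n"
  shows "unitary_diag n (mat_cnj n Q) (\<lambda>j. cnj (d j)) $$ (a,b) = cnj (unitary_diag n Q d $$ (a,b))"
  using assms by (simp add: index_unitary_diag mat_cnj_def cnj_sum)

lemma real_unitary_diag_mat_cnj: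
  assumes Q: "unitary_mat n Q" and A: "A = unitary_diag n Q lam" and real: "\<forall>i<n. \<forall>j<n. A $$ (i,j) \<in> \<real>"
  shows "A = unitary_diag n (mat_cnj n Q) (\<lambda>j. cnj (lam j))"
proof -
  have Qc: "Q \<in> carrier_mat n n" using Q unitary_mat_carrier by auto
  have c: "mat_cnj n Q \<in> carrier_mat n n" unfolding mat_cnj_def by simp
  show ?thesis
    by (rule eq_matI) (use A Qc c real in \<open>auto simp: index_unitary_diag_mat_cnj Reals_cnj_iff\<close>)
qed

lemma eigenproj_cnj:
  assumes Q: "unitary_mat n Q" and A: "A = unitary_diag n Q lam" and real: "\<forall>i<n. \<forall>j<n. A $$ (i,j) \<in> \<real>"
    and ab: "a < n" "b < n"
  shows "eigenproj n Q lam (cnj mu) $$ (a,b) = cnj (eigenproj n Q lam mu $$ (a,b))"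
proof -
  have Qc: "Q \<in> carrier_mat n n" using Q unitary_mat_carrier by auto
  have "eigenproj n Q lam (cnj mu) = matfun (\<lambda>x. of_bool (x = cnj mu)) A"
    by (rule matfun_indicator[OF Q A, symmetric])
  also have "\<dots> = unitary_diag n (mat_cnj n Q) (\<lambda>j. cnj (of_bool (lam j = mu)))"
  proof -
    have "cnj (of_bool b) = (of_bool b :: complex)" for b by (simp add: of_bool_def)
    then show ?thesis
      using matfun_unitary_diag[OF unitary_mat_cnj[OF Q] real_unitary_diag_mat_cnj[OF Q A real]] by simp
  qed
  finally show ?thesis
    unfolding eigenproj_def using index_unitary_diag_mat_cnj[OF Qc ab] by simp
qed


section \<open>Vectors with prescribed spectral weights\<close>

definition eigen_index :: "nat \<Rightarrow> complex mat \<Rightarrow> (nat \<Rightarrow> complex) \<Rightarrow> complex \<Rightarrow> nat" where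
  "eigen_index n Q lam mu = (LEAST i. i < n \<and> eigenweight n Q lam mu i > 0)"

text \<open>The vector \<open>\<Sum>\<^sub>\<mu> c(\<mu>) P(\<mu>) e(i(\<mu>))\<close>, where \<open>P(\<mu>)\<close> is the spectral projection of \<open>\<mu>\<close>,
  \<open>i(\<mu>)\<close> is an index with \<open>P(\<mu>) e(i(\<mu>)) \<noteq> 0\<close> and \<open>c(\<mu>)\<close> is chosen such that
  \<open>|c(\<mu>) P(\<mu>) e(i(\<mu>))|\<^sup>2 = w(\<mu>)\<close>.\<close>

definition weight_vector ::
  "nat \<Rightarrow> complex mat \<Rightarrow> (nat \<Rightarrow> complex) \<Rightarrow> (complex \<Rightarrow> real) \<Rightarrow> complex Matrix.vec" where
  "weight_vector n Q lam w = Matrix.vec n (\<lambda>a. \<Sum>mu\<in>lam ` {..<n}.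
     complex_of_real (sqrt (w mu / eigenweight n Q lam mu (eigen_index n Q lam mu))) *
     eigenproj n Q lam mu $$ (a, eigen_index n Q lam mu))"

lemma eigen_index_spec:
  assumes "unitary_mat n Q" "mu \<in> lam ` {..<n}"
  shows "eigen_index n Q lam mu < n" "eigenweight n Q lam mu (eigen_index n Q lam mu) > 0"
  using LeastI_ex[OF exists_eigenweight_pos[OF assms, unfolded Bex_def]]
  unfolding eigen_index_def by auto

lemma weight_vector_carrier [simp]: "weight_vector n Q lam w \<in> carrier_vec n"
  unfolding weight_vector_def by simp

lemma col_coord_weight_vector:
  assumes Q: "unitary_mat n Q" and j: "j < n"
  shows "col_coord n Q (weight_vector n Q lam w) j =
    complex_of_real (sqrt (w (lam j) / eigenweight n Q lam (lam j) (eigen_index n Q lam (lam j)))) *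
    cnj (Q $$ (eigen_index n Q lam (lam j), j))"
proof -
  let ?E = "lam ` {..<n}" and ?i = "eigen_index n Q lam"
  define c where "c mu = complex_of_real (sqrt (w mu / eigenweight n Q lam mu (?i mu)))" for mu
  have Qc: "Q \<in> carrier_mat n n" using Q unitary_mat_carrier by auto
  have "col_coord n Q (weight_vector n Q lam w) j = (\<Sum>mu\<in>?E. \<Sum>l<n.
      c mu * of_bool (lam l = mu) * cnj (Q $$ (?i mu, l)) * (\<Sum>b<n. cnj (Q $$ (b,j)) * Q $$ (b,l)))"
    unfolding col_coord_def weight_vector_def c_def
    using eigen_index_spec(1)[OF Q] Qc
    by (simp add: index_eigenproj sum_distrib_left sum_distrib_right mult_ac)
      (subst sum.swap, rule sum.cong[OF refl], subst sum.swap, simp add: sum_distrib_left mult_ac)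
  also have "\<dots> = (\<Sum>mu\<in>?E. \<Sum>l<n. c mu * of_bool (lam l = mu) * cnj (Q $$ (?i mu, l)) * of_bool (j = l))"
    using unitary_mat_cols[OF Q j] by (intro sum.cong refl) simp
  also have "\<dots> = (\<Sum>mu\<in>?E. of_bool (lam j = mu) * (c mu * cnj (Q $$ (?i mu, j))))"
    using j by (intro sum.cong refl) (simp add: mult_ac sum_distrib_left[symmetric])
  also have "\<dots> = c (lam j) * cnj (Q $$ (?i (lam j), j))"
    using j by simp
  finally show ?thesis unfolding c_def .
qed

lemma weighted_sum_weight_vector:
  assumes Q: "unitary_mat n Q" and w: "\<forall>mu. w mu \<ge> 0"
  shows "(\<Sum>j<n. (cmod (h (lam j)))\<^sup>2 * (cmod (col_coord n Q (weight_vector n Q lam w) j))\<^sup>2)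
    = (\<Sum>mu\<in>lam ` {..<n}. w mu * (cmod (h mu))\<^sup>2)"
proof -
  let ?E = "lam ` {..<n}" and ?i = "eigen_index n Q lam"
  let ?c = "\<lambda>mu. w mu / eigenweight n Q lam mu (?i mu)"
  have "(\<Sum>j<n. (cmod (h (lam j)))\<^sup>2 * (cmod (col_coord n Q (weight_vector n Q lam w) j))\<^sup>2)
      = (\<Sum>j<n. (cmod (h (lam j)))\<^sup>2 * (?c (lam j) * (cmod (Q $$ (?i (lam j), j)))\<^sup>2))"
    using w by (intro sum.cong refl)
      (simp add: col_coord_weight_vector[OF Q] norm_mult power_mult_distrib divide_nonneg_nonneg
        eigenweight_nonneg)
  also have "\<dots> = (\<Sum>mu\<in>?E. \<Sum>j\<in>{j\<in>{..<n}. lam j = mu}.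
      (cmod (h (lam j)))\<^sup>2 * (?c (lam j) * (cmod (Q $$ (?i (lam j), j)))\<^sup>2))"
    by (rule sum.group[symmetric]) auto
  also have "\<dots> = (\<Sum>mu\<in>?E. (cmod (h mu))\<^sup>2 * ?c mu * eigenweight n Q lam mu (?i mu))"
    unfolding eigenweight_eq by (intro sum.cong refl) (simp add: sum_distrib_left sum_divide_distrib mult_ac)
  also have "\<dots> = (\<Sum>mu\<in>?E. w mu * (cmod (h mu))\<^sup>2)"
  proof (intro sum.cong refl)
    fix mu assume "mu \<in> ?E"
    then show "(cmod (h mu))\<^sup>2 * ?c mu * eigenweight n Q lam mu (?i mu) = w mu * (cmod (h mu))\<^sup>2"
      using eigen_index_spec(2)[OF Q \<open>mu \<in> ?E\<close>] by simp
  qed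
  finally show ?thesis .
qed

lemma weight_vector_real:
  assumes Q: "unitary_mat n Q" and A: "A = unitary_diag n Q lam"
    and real: "\<forall>i<n. \<forall>j<n. A $$ (i,j) \<in> \<real>" and w: "\<And>mu. w (cnj mu) = w mu" and a: "a < n"
  shows "weight_vector n Q lam w $ a \<in> \<real>"
proof -
  let ?E = "lam ` {..<n}" and ?i = "eigen_index n Q lam" and ?P = "eigenproj n Q lam"
  have Qc: "Q \<in> carrier_mat n n" using Q unitary_mat_carrier by auto
  note proj_cnj = eigenproj_cnj[OF Q A real]
  have E_cnj: "cnj ` ?E = ?E"
    using cnj_eigenvalue_real_unitary_diag[OF Q A real] by (force intro: image_eqI[of _ cnj "cnj _"])
  \<comment> \<open>conjugation permutes the eigenvalues and preserves all the choices made in \<open>weight_vector\<close>\<close>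
  have weight_cnj: "eigenweight n Q lam (cnj mu) i = eigenweight n Q lam mu i" if "i < n" for mu i
    using proj_cnj[OF that that, of mu] eigenproj_diag[OF Qc that] by simp
  then have index_cnj: "?i (cnj mu) = ?i mu" for mu
    unfolding eigen_index_def by metis
  have "cnj (weight_vector n Q lam w $ a) = (\<Sum>mu\<in>?E.
      complex_of_real (sqrt (w (cnj mu) / eigenweight n Q lam (cnj mu) (?i (cnj mu)))) * ?P (cnj mu) $$ (a, ?i (cnj mu)))"
    unfolding weight_vector_def using a eigen_index_spec(1)[OF Q]
    by (simp add: cnj_sum w weight_cnj index_cnj proj_cnj)
  also have "\<dots> = (\<Sum>mu\<in>cnj ` ?E.
      complex_of_real (sqrt (w mu / eigenweight n Q lam mu (?i mu))) * ?P mu $$ (a, ?i mu))"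
    by (rule sum.reindex[symmetric, unfolded comp_def]) (auto intro: inj_onI)
  also have "\<dots> = weight_vector n Q lam w $ a"
    unfolding E_cnj weight_vector_def using a by simp
  finally show ?thesis by (simp add: Reals_cnj_iff)
qed


section \<open>Best uniform approximation on a finite set\<close>

definition max_norm_on :: "complex set \<Rightarrow> (complex \<Rightarrow> complex) \<Rightarrow> real" where
  "max_norm_on E h = Max ((\<lambda>x. cmod (h x)) ` E)"

lemma max_norm_on_ge: "finite E \<Longrightarrow> x \<in> E \<Longrightarrow> cmod (h x) \<le> max_norm_on E h"
  unfolding max_norm_on_def by (rule Max_ge) auto

lemma max_norm_on_attained: "finite E \<Longrightarrow> E \<noteq> {} \<Longrightarrow> \<exists>x\<in>E. cmod (h x) = max_norm_on E h"
  unfolding max_norm_on_def using Max_in[of "(\<lambda>x. cmod (h x)) ` E"] by fastforce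

lemma max_norm_on_le:
  "finite E \<Longrightarrow> E \<noteq> {} \<Longrightarrow> (\<And>x. x \<in> E \<Longrightarrow> cmod (h x) \<le> b) \<Longrightarrow> max_norm_on E h \<le> b"
  using max_norm_on_attained by metis

lemma max_norm_on_less:
  "finite E \<Longrightarrow> E \<noteq> {} \<Longrightarrow> (\<And>x. x \<in> E \<Longrightarrow> cmod (h x) < b) \<Longrightarrow> max_norm_on E h < b"
  using max_norm_on_attained by metis

lemma max_norm_on_nonneg: "finite E \<Longrightarrow> E \<noteq> {} \<Longrightarrow> max_norm_on E h \<ge> 0"
  using max_norm_on_attained by (metis norm_ge_zero)

lemma scalar_seminorm_max_norm_on:
  assumes E: "finite E" "E \<noteq> {}" and K: "real_or_complex K"
  shows "scalar_seminorm K (max_norm_on E)"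
proof
  fix g h :: "complex \<Rightarrow> complex"
  show "max_norm_on E (\<lambda>x. g x + h x) \<le> max_norm_on E g + max_norm_on E h"
  proof (rule max_norm_on_le[OF E])
    fix x assume x: "x \<in> E"
    have "cmod (g x + h x) \<le> cmod (g x) + cmod (h x)" by (rule norm_triangle_ineq)
    also have "\<dots> \<le> max_norm_on E g + max_norm_on E h"
      using max_norm_on_ge[OF E(1) x] by (simp add: add_mono)
    finally show "cmod (g x + h x) \<le> max_norm_on E g + max_norm_on E h" .
  qed
next
  fix z g
  show "max_norm_on E (\<lambda>x. z * g x) = cmod z * max_norm_on E g"
  proof (rule antisym)
    show "max_norm_on E (\<lambda>x. z * g x) \<le> cmod z * max_norm_on E g"
      using max_norm_on_ge[OF E(1)]
      by (intro max_norm_on_le[OF E]) (simp add: norm_mult mult_left_mono)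
    obtain x where x: "x \<in> E" "cmod (g x) = max_norm_on E g" using max_norm_on_attained[OF E] by blast
    then show "cmod z * max_norm_on E g \<le> max_norm_on E (\<lambda>x. z * g x)"
      using max_norm_on_ge[OF E(1) x(1), of "\<lambda>x. z * g x"] by (simp add: norm_mult)
  qed
qed (rule K)

text \<open>The admissible step size in \<open>|w - t d| < c\<close>: for \<open>|w| = c\<close> it comes from the quadratic expansion
  of \<open>|w - t d|\<^sup>2\<close>, otherwise from the gap \<open>c - |w|\<close>.\<close>

lemma cmod_diff_real_mult_less:
  fixes w d :: complex
  assumes t: "0 < t" and le: "cmod w \<le> c"
    and small: "t < (if cmod w = c then 2 * Re (cnj w * d) / ((cmod d)\<^sup>2 + 1) else (c - cmod w) / (cmod d + 1))"
  shows "cmod (w - complex_of_real t * d) < c"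
proof (cases "cmod w = c")
  case True
  define R where "R = Re (cnj w * d)"
  have "t * ((cmod d)\<^sup>2 + 1) < 2 * R"
    using small True unfolding R_def by (simp add: pos_less_divide_eq add_nonneg_pos)
  then have "t * (cmod d)\<^sup>2 < 2 * R" using t by (simp add: distrib_left)
  then have "t * (2 * R - t * (cmod d)\<^sup>2) > 0" using t by simp
  moreover have "(cmod (w - complex_of_real t * d))\<^sup>2 = c\<^sup>2 - t * (2 * R - t * (cmod d)\<^sup>2)"
    unfolding True[symmetric] cmod_power2 R_def by (simp add: power2_eq_square algebra_simps)
  ultimately have "(cmod (w - complex_of_real t * d))\<^sup>2 < c\<^sup>2" by linarith
  then show ?thesis using True by (metis norm_ge_zero power_less_imp_less_base)
next
  case False
  have "cmod (w - complex_of_real t * d) \<le> cmod w + t * cmod d"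
    using norm_triangle_ineq4[of w "complex_of_real t * d"] t by (simp add: norm_mult)
  also have "\<dots> \<le> cmod w + t * (cmod d + 1)" using t by simp
  also have "t * (cmod d + 1) < c - cmod w"
    using small False by (simp add: pos_less_divide_eq add_nonneg_pos)
  finally show ?thesis by simp
qed

lemma max_norm_on_descent:
  assumes E: "finite E" "E \<noteq> {}" and c: "c = max_norm_on E g"
    and descent: "\<And>mu. mu \<in> E \<Longrightarrow> cmod (g mu) = c \<Longrightarrow> Re (cnj (g mu) * d mu) > 0"
  shows "\<exists>t>0. max_norm_on E (\<lambda>x. g x - complex_of_real t * d x) < c"
proof -
  have le_c: "cmod (g mu) \<le> c" if "mu \<in> E" for mu unfolding c by (rule max_norm_on_ge[OF E(1) that])
  define bound where "bound mu = (if cmod (g mu) = c then 2 * Re (cnj (g mu) * d mu) / ((cmod (d mu))\<^sup>2 + 1)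
     else (c - cmod (g mu)) / (cmod (d mu) + 1))" for mu
  have "bound mu > 0" if "mu \<in> E" for mu
  proof (cases "cmod (g mu) = c")
    case True
    then show ?thesis using descent[OF that True] unfolding bound_def by (simp add: add_nonneg_pos)
  qed (use le_c[OF that] in \<open>simp add: bound_def add_nonneg_pos\<close>)
  then have Min_pos: "Min (bound ` E) > 0" using E by (subst Min_gr_iff) auto
  define t where "t = Min (bound ` E) / 2"
  have t: "t > 0" using Min_pos unfolding t_def by simp
  have "t < bound mu" if "mu \<in> E" for mu
    using Min_le[of "bound ` E" "bound mu"] E that Min_pos unfolding t_def by fastforce
  then have "cmod (g mu - complex_of_real t * d mu) < c" if "mu \<in> E" for mu
    using cmod_diff_real_mult_less[OF t le_c] that unfolding bound_def by blast
  then have "max_norm_on E (\<lambda>x. g x - complex_of_real t * d x) < c" by (rule max_norm_on_less[OF E])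
  then show ?thesis using t by blast
qed

subsection \<open>Characterisation of the best approximation by weights\<close>

definition prob_simplex :: "'a set \<Rightarrow> ('a \<Rightarrow> real) set" where
  "prob_simplex J = {w. (\<forall>m. 0 \<le> w m) \<and> (\<forall>m. m \<notin> J \<longrightarrow> w m = 0) \<and> sum w J = 1}"

lemma compact_prob_simplex:
  assumes "finite J"
  shows "compact (prob_simplex J)"
proof -
  have "prob_simplex J = PiE UNIV (\<lambda>m. if m \<in> J then {0..1} else {0}) \<inter> {w. sum w J = 1}"
  proof (intro equalityI subsetI)
    fix w assume w: "w \<in> prob_simplex J"
    then have "w m \<le> 1" if "m \<in> J" for m
      using member_le_sum[of m J w] that assms unfolding prob_simplex_def by auto
    with w show "w \<in> PiE UNIV (\<lambda>m. if m \<in> J then {0..1} else {0}) \<inter> {w. sum w J = 1}"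
      unfolding prob_simplex_def by (auto simp: PiE_iff)
  qed (auto simp: prob_simplex_def PiE_iff split: if_splits)
  moreover have "compactin (product_topology (\<lambda>m. euclidean) UNIV)
      (PiE UNIV (\<lambda>m. if m \<in> J then {0..1::real} else {0}))"
    by (subst compactin_PiE) auto
  then have "compact (PiE UNIV (\<lambda>m. if m \<in> J then {0..1::real} else {0}))"
    by (simp add: euclidean_product_topology)
  moreover have "closed {w :: 'a \<Rightarrow> real. sum w J = 1}"
    by (rule closed_Collect_eq)
      (auto intro!: continuous_intros continuous_on_subset[OF continuous_on_product_coordinates])
  ultimately show ?thesis by (simp add: closed_Int_compact Int_commute)
qed

lemma nonneg_of_small_multiples:
  fixes a b :: real
  assumes b: "b \<ge> 0" and small: "\<And>t. 0 < t \<Longrightarrow> t \<le> 1 \<Longrightarrow> 2 * a + t * b \<ge> 0"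
  shows "a \<ge> 0"
proof (rule ccontr)
  assume "\<not> a \<ge> 0"
  then have a: "a < 0" by simp
  define t where "t = min 1 (- a / (b + 1))"
  have "- a / (b + 1) > 0" using a b by (intro divide_pos_pos) auto
  then have t: "0 < t" "t \<le> 1" unfolding t_def by auto
  have "t * b \<le> - a / (b + 1) * b" using b unfolding t_def by (intro mult_right_mono) auto
  also have "\<dots> = - a * (b / (b + 1))" by simp
  also have "\<dots> \<le> - a * 1" using a b by (intro mult_left_mono) auto
  finally show False using small[OF t] a by linarith
qed

definition convex_comb :: "'a set \<Rightarrow> ('a \<Rightarrow> real) \<Rightarrow> ('a \<Rightarrow> nat \<Rightarrow> complex) \<Rightarrow> nat \<Rightarrow> complex" where
  "convex_comb J w x i = (\<Sum>m\<in>J. complex_of_real (w m) * x m i)"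

lemma convex_comb_move_to_vertex:
  assumes J: "finite J" and nu: "nu \<in> J" and w: "w \<in> prob_simplex J" and t: "0 \<le> t" "t \<le> 1"
  shows "(\<lambda>m. (1 - t) * w m + (if m = nu then t else 0)) \<in> prob_simplex J"
    and "convex_comb J (\<lambda>m. (1 - t) * w m + (if m = nu then t else 0)) x i
      = convex_comb J w x i + complex_of_real t * (x nu i - convex_comb J w x i)"
proof -
  show "(\<lambda>m. (1 - t) * w m + (if m = nu then t else 0)) \<in> prob_simplex J"
    using w nu t J unfolding prob_simplex_def by (auto simp: sum.distrib sum_distrib_left[symmetric])
  have "complex_of_real ((1 - t) * w m + (if m = nu then t else 0)) * x m i
      = complex_of_real (1 - t) * (complex_of_real (w m) * x m i)
        + (if m = nu then complex_of_real t * x m i else 0)" for m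
    by (simp add: algebra_simps)
  then have "convex_comb J (\<lambda>m. (1 - t) * w m + (if m = nu then t else 0)) x i
      = complex_of_real (1 - t) * convex_comb J w x i + (\<Sum>m\<in>J. if m = nu then complex_of_real t * x m i else 0)"
    unfolding convex_comb_def by (simp add: sum.distrib sum_distrib_left)
  then show "convex_comb J (\<lambda>m. (1 - t) * w m + (if m = nu then t else 0)) x i
      = convex_comb J w x i + complex_of_real t * (x nu i - convex_comb J w x i)"
    using nu J by (simp add: algebra_simps)
qed

text \<open>First-order optimality condition for the point of minimal norm in the convex hull of the
  vectors \<open>x m \<in> \<complex>\<^sup>k\<close>.\<close>

lemma min_norm_convex_comb_inner_ge:
  fixes x :: "'a \<Rightarrow> nat \<Rightarrow> complex"
  assumes J: "finite J" and nu: "nu \<in> J" and w0: "w0 \<in> prob_simplex J"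
    and min: "\<And>w. w \<in> prob_simplex J \<Longrightarrow>
      (\<Sum>i<k. (cmod (convex_comb J w0 x i))\<^sup>2) \<le> (\<Sum>i<k. (cmod (convex_comb J w x i))\<^sup>2)"
  shows "(\<Sum>i<k. (cmod (convex_comb J w0 x i))\<^sup>2) \<le> (\<Sum>i<k. Re (x nu i * cnj (convex_comb J w0 x i)))"
proof -
  let ?z = "convex_comb J w0 x"
  define a where "a = (\<Sum>i<k. Re ((x nu i - ?z i) * cnj (?z i)))"
  define b where "b = (\<Sum>i<k. (cmod (x nu i - ?z i))\<^sup>2)"
  have "2 * a + t * b \<ge> 0" if t: "0 < t" "t \<le> 1" for t
  proof -
    have "0 \<le> t" using t by simp
    note move = convex_comb_move_to_vertex[OF J nu w0 this t(2)]
    have "(\<Sum>i<k. (cmod (?z i))\<^sup>2) \<le> (\<Sum>i<k. (cmod (?z i + complex_of_real t * (x nu i - ?z i)))\<^sup>2)"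
      using min[OF move(1)] unfolding move(2) .
    also have "\<dots> = (\<Sum>i<k. (cmod (?z i))\<^sup>2 + 2 * t * Re ((x nu i - ?z i) * cnj (?z i))
        + t\<^sup>2 * (cmod (x nu i - ?z i))\<^sup>2)"
      by (simp only: cmod_add_real_mult_sq)
    also have "\<dots> = (\<Sum>i<k. (cmod (?z i))\<^sup>2) + 2 * t * a + t\<^sup>2 * b"
      unfolding a_def b_def by (simp only: sum.distrib sum_distrib_left mult.assoc)
    finally have "0 \<le> t * (2 * a + t * b)" by (simp add: algebra_simps power2_eq_square)
    then show ?thesis using t by (simp add: zero_le_mult_iff)
  qed
  moreover have "b \<ge> 0" unfolding b_def by (auto intro: sum_nonneg)
  ultimately have "a \<ge> 0" by (rule nonneg_of_small_multiples[rotated])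
  then have "(\<Sum>i<k. Re (?z i * cnj (?z i))) \<le> (\<Sum>i<k. Re (x nu i * cnj (?z i)))"
    unfolding a_def by (simp add: algebra_simps sum_subtractf)
  moreover have "(\<Sum>i<k. Re (?z i * cnj (?z i))) = (\<Sum>i<k. (cmod (?z i))\<^sup>2)"
    by (simp only: complex_mult_cnj Re_complex_of_real cmod_power2)
  ultimately show ?thesis by linarith
qed

lemma exists_min_norm_convex_comb:
  fixes x :: "'a \<Rightarrow> nat \<Rightarrow> complex"
  assumes J: "finite J" "J \<noteq> {}"
  shows "\<exists>w\<in>prob_simplex J. \<forall>nu\<in>J.
    (\<Sum>i<k. (cmod (convex_comb J w x i))\<^sup>2) \<le> (\<Sum>i<k. Re (x nu i * cnj (convex_comb J w x i)))"
proof -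
  obtain m0 where m0: "m0 \<in> J" using J by auto
  have "(\<lambda>m. of_bool (m = m0)) \<in> prob_simplex J" using m0 J by (auto simp: prob_simplex_def)
  moreover have "continuous_on (prob_simplex J) (\<lambda>w. \<Sum>i<k. (cmod (convex_comb J w x i))\<^sup>2)"
    unfolding convex_comb_def
    by (auto intro!: continuous_intros continuous_on_subset[OF continuous_on_product_coordinates])
  ultimately obtain w0 where "w0 \<in> prob_simplex J"
    "\<And>w. w \<in> prob_simplex J \<Longrightarrow> (\<Sum>i<k. (cmod (convex_comb J w0 x i))\<^sup>2) \<le> (\<Sum>i<k. (cmod (convex_comb J w x i))\<^sup>2)"
    using continuous_attains_inf[OF compact_prob_simplex[OF J(1)]] by blast
  with min_norm_convex_comb_inner_ge[OF J(1)] show ?thesis by blast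
qed



definition residual ::
  "nat \<Rightarrow> (complex \<Rightarrow> complex) \<Rightarrow> (nat \<Rightarrow> complex \<Rightarrow> complex) \<Rightarrow> (nat \<Rightarrow> complex) \<Rightarrow> complex \<Rightarrow> complex"
  where "residual k f phi a x = f x - (\<Sum>i<k. a i * phi i x)"

locale best_uniform_approximation =
  fixes K :: "complex set" and E :: "complex set" and k :: nat
    and f :: "complex \<Rightarrow> complex" and phi :: "nat \<Rightarrow> complex \<Rightarrow> complex" and astar :: "nat \<Rightarrow> complex"
  assumes scalars: "real_or_complex K" and finite: "finite E" and nonempty: "E \<noteq> {}"
    and astar: "\<forall>i<k. astar i \<in> K"
    and optimal: "\<And>b. \<forall>i<k. b i \<in> K \<Longrightarrow>
      max_norm_on E (residual k f phi astar) \<le> max_norm_on E (residual k f phi b)"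
begin

definition error :: real where "error = max_norm_on E (residual k f phi astar)"

definition extremal :: "complex set" where
  "extremal = {mu \<in> E. cmod (residual k f phi astar mu) = error}"

text \<open>\<open>gradient mu\<close> represents the real-linear form \<open>b \<mapsto> Re (conj r(mu) \<Sum> b\<^sub>i \<phi>\<^sub>i(mu))\<close> on \<open>K\<^sup>k\<close>,
  where \<open>r\<close> is the optimal residual.\<close>

definition gradient :: "complex \<Rightarrow> nat \<Rightarrow> complex" where
  "gradient mu i = proj_scalar K (residual k f phi astar mu * cnj (phi i mu))"

lemma extremal_finite: "finite extremal" and extremal_nonempty: "extremal \<noteq> {}"
  and extremal_subset: "extremal \<subseteq> E"
  using finite max_norm_on_attained[OF finite nonempty] unfolding extremal_def error_def by auto

lemma Re_cnj_residual_mult: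
  assumes "\<forall>i<k. b i \<in> K"
  shows "Re (cnj (residual k f phi astar mu) * (\<Sum>i<k. b i * phi i mu)) = (\<Sum>i<k. Re (gradient mu i * cnj (b i)))"
proof -
  have Re_cnj: "Re (cnj r * (b * p)) = Re (r * cnj p * cnj b)" for r b p :: complex
    by (subst cnj.sel(1)[symmetric]) (simp add: mult_ac)
  have "Re (cnj (residual k f phi astar mu) * (\<Sum>i<k. b i * phi i mu))
      = (\<Sum>i<k. Re (residual k f phi astar mu * cnj (phi i mu) * cnj (b i)))"
    by (simp only: sum_distrib_left Re_sum Re_cnj)
  also have "\<dots> = (\<Sum>i<k. Re (gradient mu i * cnj (b i)))"
    unfolding gradient_def using assms by (intro sum.cong refl Re_mult_proj_scalar scalars) auto
  finally show ?thesis .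
qed

text \<open>If the minimal-norm point of the convex hull of the gradients at the extremal points were
  non-zero, it would be a direction of descent for the maximal error.\<close>

lemma min_norm_gradient_comb_zero:
  assumes w: "w \<in> prob_simplex extremal"
    and min_norm: "\<forall>nu\<in>extremal. (\<Sum>i<k. (cmod (convex_comb extremal w gradient i))\<^sup>2) \<le>
       (\<Sum>i<k. Re (gradient nu i * cnj (convex_comb extremal w gradient i)))"
  shows "\<forall>i<k. convex_comb extremal w gradient i = 0"
proof (rule ccontr)
  let ?z = "convex_comb extremal w gradient"
  have zK: "?z i \<in> K" for i
    unfolding convex_comb_def gradient_def
    by (intro real_or_complex_sum scalars) (simp add: proj_scalar_in scalars real_or_complex_closed)
  assume "\<not> (\<forall>i<k. ?z i = 0)"
  then have pos: "(\<Sum>i<k. (cmod (?z i))\<^sup>2) > 0" by (auto intro: sum_pos2)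
  define d where "d mu = (\<Sum>i<k. ?z i * phi i mu)" for mu
  have "Re (cnj (residual k f phi astar mu) * d mu) > 0" if "mu \<in> extremal" for mu
  proof -
    have "(\<Sum>i<k. (cmod (?z i))\<^sup>2) \<le> (\<Sum>i<k. Re (gradient mu i * cnj (?z i)))"
      using min_norm that by blast
    also have "\<dots> = Re (cnj (residual k f phi astar mu) * d mu)"
      unfolding d_def by (rule Re_cnj_residual_mult[symmetric]) (simp add: zK)
    finally show ?thesis using pos by linarith
  qed
  then obtain t where "max_norm_on E (\<lambda>x. residual k f phi astar x - complex_of_real t * d x) < error"
    using max_norm_on_descent[OF finite nonempty error_def] unfolding extremal_def by blast
  moreover have "(\<lambda>x. residual k f phi astar x - complex_of_real t * d x)
      = residual k f phi (\<lambda>i. astar i + complex_of_real t * ?z i)"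
    unfolding residual_def d_def by (auto simp: algebra_simps sum.distrib sum_distrib_left)
  moreover have "\<forall>i<k. astar i + complex_of_real t * ?z i \<in> K"
    using astar zK scalars unfolding real_or_complex_def by auto
  ultimately show False using optimal unfolding error_def by fastforce
qed

lemma error_sq_le_weighted_sum:
  assumes w: "w \<in> prob_simplex extremal" and zero: "\<forall>i<k. convex_comb extremal w gradient i = 0"
    and a: "\<forall>i<k. a i \<in> K"
  shows "error\<^sup>2 \<le> (\<Sum>mu\<in>E. w mu * (cmod (residual k f phi a mu))\<^sup>2)"
proof -
  define b where "b i = a i - astar i" for i
  define L where "L mu = Re (cnj (residual k f phi astar mu) * (\<Sum>i<k. b i * phi i mu))" for mu
  have Re_of_real_mult: "Re (complex_of_real r * y) = r * Re y" for r y by simp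
  have bK: "\<forall>i<k. b i \<in> K" unfolding b_def using a astar real_or_complex_closed[OF scalars] by auto
  \<comment> \<open>first-order expansion of \<open>|r\<^sub>a|\<^sup>2\<close> around the optimal residual; the linear terms cancel in the
    weighted sum since the weighted combination of gradients vanishes\<close>
  have "(\<Sum>mu\<in>extremal. w mu * L mu) = (\<Sum>i<k. Re (convex_comb extremal w gradient i * cnj (b i)))"
    unfolding L_def Re_cnj_residual_mult[OF bK] convex_comb_def sum_distrib_right Re_sum
    by (simp only: sum_distrib_left Re_of_real_mult mult.assoc) (rule sum.swap)
  also have "\<dots> = 0" using zero by simp
  finally have lin: "(\<Sum>mu\<in>extremal. w mu * L mu) = 0" .
  have "(\<Sum>mu\<in>extremal. w mu * ((cmod (residual k f phi astar mu))\<^sup>2 - 2 * L mu))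
      = error\<^sup>2 * sum w extremal - 2 * (\<Sum>mu\<in>extremal. w mu * L mu)"
    unfolding extremal_def by (simp add: right_diff_distrib sum_subtractf sum_distrib_left sum_distrib_right mult_ac)
  then have "error\<^sup>2 = (\<Sum>mu\<in>extremal. w mu * ((cmod (residual k f phi astar mu))\<^sup>2 - 2 * L mu))"
    using w lin unfolding prob_simplex_def by simp
  also have "\<dots> \<le> (\<Sum>mu\<in>extremal. w mu * (cmod (residual k f phi a mu))\<^sup>2)"
  proof (intro sum_mono mult_left_mono)
    fix mu
    have "residual k f phi a mu = residual k f phi astar mu - (\<Sum>i<k. b i * phi i mu)"
      unfolding residual_def b_def by (simp add: algebra_simps sum_subtractf)
    then show "(cmod (residual k f phi astar mu))\<^sup>2 - 2 * L mu \<le> (cmod (residual k f phi a mu))\<^sup>2"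
      unfolding L_def by (simp only: cmod_diff_sq_ge)
  qed (use w in \<open>simp add: prob_simplex_def\<close>)
  also have "\<dots> = (\<Sum>mu\<in>E. w mu * (cmod (residual k f phi a mu))\<^sup>2)"
    using w finite extremal_subset unfolding prob_simplex_def by (intro sum.mono_neutral_left) auto
  finally show ?thesis .
qed

lemma exists_weights:
  "\<exists>w. (\<forall>mu. w mu \<ge> 0) \<and> sum w E = 1 \<and>
     (\<forall>a. (\<forall>i<k. a i \<in> K) \<longrightarrow> error\<^sup>2 \<le> (\<Sum>mu\<in>E. w mu * (cmod (residual k f phi a mu))\<^sup>2))"
proof -
  obtain w where w: "w \<in> prob_simplex extremal"
    and min_norm: "\<forall>nu\<in>extremal. (\<Sum>i<k. (cmod (convex_comb extremal w gradient i))\<^sup>2) \<le>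
       (\<Sum>i<k. Re (gradient nu i * cnj (convex_comb extremal w gradient i)))"
    using exists_min_norm_convex_comb[OF extremal_finite extremal_nonempty] by blast
  have "sum w E = sum w extremal"
    using w finite extremal_subset unfolding prob_simplex_def by (intro sum.mono_neutral_right) auto
  then show ?thesis
    using w error_sq_le_weighted_sum[OF w min_norm_gradient_comb_zero[OF w min_norm]]
    unfolding prob_simplex_def by auto
qed

lemma exists_symmetric_weights:
  assumes real_case: "K = \<real> \<Longrightarrow> \<forall>mu\<in>E. cnj mu \<in> E \<and> f (cnj mu) = cnj (f mu) \<and>
      (\<forall>i<k. phi i (cnj mu) = cnj (phi i mu))"
  shows "\<exists>w. (\<forall>mu. w mu \<ge> 0) \<and> sum w E = 1 \<and>
     (\<forall>a. (\<forall>i<k. a i \<in> K) \<longrightarrow> error\<^sup>2 \<le> (\<Sum>mu\<in>E. w mu * (cmod (residual k f phi a mu))\<^sup>2)) \<and>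
     (K = \<real> \<longrightarrow> (\<forall>mu. w (cnj mu) = w mu))"
proof -
  obtain w0 where w0: "\<forall>mu. w0 mu \<ge> 0" "sum w0 E = 1"
     "\<forall>a. (\<forall>i<k. a i \<in> K) \<longrightarrow> error\<^sup>2 \<le> (\<Sum>mu\<in>E. w0 mu * (cmod (residual k f phi a mu))\<^sup>2)"
    using exists_weights by blast
  show ?thesis
  proof (cases "K = \<real>")
    case False
    then show ?thesis using w0 by blast
  next
    case True
    note sym = real_case[OF True]
    have sum_cnj: "(\<Sum>mu\<in>E. g (cnj mu)) = (\<Sum>mu\<in>E. g mu)" for g :: "complex \<Rightarrow> real"
    proof -
      have "cnj ` E = E" using sym by (force intro: image_eqI[of _ cnj "cnj _"])
      then show ?thesis using sum.reindex[of cnj E g] by (simp add: inj_on_def comp_def)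
    qed
    \<comment> \<open>for real coefficients the residual commutes with conjugation, so the conjugated weights work as
      well, and so does their average\<close>
    have residual_cnj: "residual k f phi a (cnj mu) = cnj (residual k f phi a mu)"
      if "\<forall>i<k. a i \<in> K" "mu \<in> E" for a mu
      using that sym True unfolding residual_def by (simp add: cnj_sum Reals_cnj_iff)
    define w where "w mu = (w0 mu + w0 (cnj mu)) / 2" for mu
    have "error\<^sup>2 \<le> (\<Sum>mu\<in>E. w mu * (cmod (residual k f phi a mu))\<^sup>2)" if a: "\<forall>i<k. a i \<in> K" for a
    proof -
      have "(\<Sum>mu\<in>E. w0 (cnj mu) * (cmod (residual k f phi a mu))\<^sup>2)
          = (\<Sum>mu\<in>E. w0 mu * (cmod (residual k f phi a mu))\<^sup>2)"
        using sum_cnj[of "\<lambda>mu. w0 mu * (cmod (residual k f phi a (cnj mu)))\<^sup>2"] residual_cnj[OF a]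
        by simp
      then show ?thesis using w0(3) a unfolding w_def
        by (simp add: add_divide_distrib sum.distrib sum_divide_distrib[symmetric] distrib_right)
    qed
    moreover have "sum w E = 1" using w0(2) sum_cnj[of w0] unfolding w_def
      by (simp add: sum_divide_distrib[symmetric] sum.distrib)
    moreover have "w mu \<ge> 0" "w (cnj mu) = w mu" for mu using w0(1) unfolding w_def by simp_all
    ultimately show ?thesis by blast
  qed
qed

end



lemma exists_best_uniform_approximation:
  assumes K: "real_or_complex K" and E: "finite E" "E \<noteq> {}"
  shows "\<exists>astar. best_uniform_approximation K E k f phi astar"
proof -
  interpret scalar_seminorm K "max_norm_on E" by (rule scalar_seminorm_max_norm_on[OF E K])
  obtain astar where "\<forall>i<k. astar i \<in> K" "\<forall>b. (\<forall>i<k. b i \<in> K) \<longrightarrow>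
      max_norm_on E (residual k f phi astar) \<le> max_norm_on E (residual k f phi b)"
    using exists_best_approximation[of k f phi] unfolding residual_def by blast
  then show ?thesis using K E by (intro exI[of _ astar], unfold_locales) blast+
qed


section \<open>The min-max identity\<close>

lemma saddle_point_min_max:
  fixes F :: "'v \<Rightarrow> 'a \<Rightarrow> real"
  assumes vs: "vs \<in> U" and astar: "P astar"
    and lower: "\<And>a. P a \<Longrightarrow> c \<le> F vs a"
    and upper: "\<And>v. v \<in> U \<Longrightarrow> F v astar \<le> c"
    and bdd: "\<And>a. P a \<Longrightarrow> bdd_above ((\<lambda>v. F v a) ` U)"
  shows "is_max {mu. \<exists>v\<in>U. is_min {F v a | a. P a} mu} c"
    and "is_min {(SUP v\<in>U. F v a) | a. P a} c"
proof -
  have "is_min {F vs a | a. P a} c"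
    unfolding is_min_def using astar lower upper[OF vs] by (auto intro!: antisym)
  moreover have "mu \<le> c" if "v \<in> U" "is_min {F v a | a. P a} mu" for v mu
    using that astar upper unfolding is_min_def by (blast intro: order.trans)
  ultimately show "is_max {mu. \<exists>v\<in>U. is_min {F v a | a. P a} mu} c"
    unfolding is_max_def using vs by blast
  have "(SUP v\<in>U. F v astar) = c"
    using vs upper lower[OF astar] cSUP_upper[OF vs bdd[OF astar]]
    by (intro antisym cSUP_least) auto
  moreover have "c \<le> (SUP v\<in>U. F v a)" if "P a" for a
    using lower[OF that] cSUP_upper[OF vs bdd[OF that]] by (rule order.trans)
  ultimately show "is_min {(SUP v\<in>U. F v a) | a. P a} c"
    unfolding is_min_def using astar by (auto intro!: exI[of _ astar])
qed

text \<open>\<open>eig_weighted_norm n Q lam v h\<close> is \<open>\<parallel>h(A) v\<parallel>\<close> for \<open>A = Q diag(lam) Q\<^sup>H\<close>.\<close>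

definition eig_weighted_norm ::
  "nat \<Rightarrow> complex mat \<Rightarrow> (nat \<Rightarrow> complex) \<Rightarrow> complex Matrix.vec \<Rightarrow> (complex \<Rightarrow> complex) \<Rightarrow> real" where
  "eig_weighted_norm n Q lam v h = sqrt (\<Sum>j<n. (cmod (h (lam j)))\<^sup>2 * (cmod (col_coord n Q v j))\<^sup>2)"

lemma scalar_seminorm_eig_weighted_norm:
  assumes "real_or_complex K"
  shows "scalar_seminorm K (eig_weighted_norm n Q lam v)"
proof
  have L2: "eig_weighted_norm n Q lam v h = L2_set (\<lambda>j. cmod (h (lam j)) * cmod (col_coord n Q v j)) {..<n}"
    for h unfolding eig_weighted_norm_def L2_set_def by (simp add: power_mult_distrib)
  fix g h :: "complex \<Rightarrow> complex"
  have "eig_weighted_norm n Q lam v (\<lambda>x. g x + h x) \<le> L2_set (\<lambda>j. cmod (g (lam j)) * cmod (col_coord n Q v j)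
      + cmod (h (lam j)) * cmod (col_coord n Q v j)) {..<n}"
    unfolding L2 by (rule L2_set_mono)
      (auto simp: distrib_right[symmetric] intro!: mult_right_mono norm_triangle_ineq)
  also have "\<dots> \<le> eig_weighted_norm n Q lam v g + eig_weighted_norm n Q lam v h"
    unfolding L2 by (rule L2_set_triangle_ineq)
  finally show "eig_weighted_norm n Q lam v (\<lambda>x. g x + h x)
      \<le> eig_weighted_norm n Q lam v g + eig_weighted_norm n Q lam v h" .
next
  have L2: "eig_weighted_norm n Q lam v h = L2_set (\<lambda>j. cmod (h (lam j)) * cmod (col_coord n Q v j)) {..<n}"
    for h unfolding eig_weighted_norm_def L2_set_def by (simp add: power_mult_distrib)
  fix z g
  show "eig_weighted_norm n Q lam v (\<lambda>x. z * g x) = cmod z * eig_weighted_norm n Q lam v g"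
    unfolding L2 by (subst L2_set_right_distrib) (auto simp: norm_mult mult.assoc)
qed (rule assms)

lemma eig_weighted_norm_le_max_norm_on:
  assumes "(\<Sum>j<n. (cmod (col_coord n Q v j))\<^sup>2) = 1" and "n > 0"
  shows "eig_weighted_norm n Q lam v h \<le> max_norm_on (lam ` {..<n}) h"
proof -
  let ?M = "max_norm_on (lam ` {..<n}) h"
  have "(\<Sum>j<n. (cmod (h (lam j)))\<^sup>2 * (cmod (col_coord n Q v j))\<^sup>2) \<le> (\<Sum>j<n. ?M\<^sup>2 * (cmod (col_coord n Q v j))\<^sup>2)"
    using max_norm_on_ge[of "lam ` {..<n}"]
    by (intro sum_mono mult_right_mono power_mono) auto
  also have "\<dots> = ?M\<^sup>2" using assms(1) by (simp add: sum_distrib_left[symmetric])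
  finally have "eig_weighted_norm n Q lam v h \<le> sqrt (?M\<^sup>2)"
    unfolding eig_weighted_norm_def by (rule real_sqrt_le_mono)
  also have "\<dots> = ?M" using max_norm_on_nonneg[of "lam ` {..<n}" h] assms(2) by fastforce
  finally show ?thesis .
qed


lemma residual_matrix:
  assumes Q: "unitary_mat n Q" and A: "A = unitary_diag n Q lam"
  shows "matfun f A - pmat k a phi A = unitary_diag n Q (\<lambda>j. residual k f phi a (lam j))"
  unfolding matfun_unitary_diag[OF Q A] pmat_unitary_diag[OF Q A] residual_def
  by (rule unitary_diag_minus[OF unitary_mat_carrier[OF Q]])

lemma vnorm_residual_matrix:
  assumes Q: "unitary_mat n Q" and A: "A = unitary_diag n Q lam" and v: "v \<in> carrier_vec n"
  shows "vnorm ((matfun f A - pmat k a phi A) *\<^sub>v v) = eig_weighted_norm n Q lam v (residual k f phi a)"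
  unfolding residual_matrix[OF Q A] vnorm_unitary_diag_mult_vec[OF Q v] eig_weighted_norm_def ..

lemma exists_best_residual_norm:
  assumes K: "real_or_complex K" and Q: "unitary_mat n Q" and A: "A = unitary_diag n Q lam"
    and v: "v \<in> carrier_vec n"
  shows "\<exists>mu. is_min {vnorm ((matfun f A - pmat k alpha phi A) *\<^sub>v v) | alpha. \<forall>i<k. alpha i \<in> K} mu"
proof -
  interpret scalar_seminorm K "eig_weighted_norm n Q lam v"
    by (rule scalar_seminorm_eig_weighted_norm[OF K])
  obtain a where "\<forall>i<k. a i \<in> K" and "\<forall>b. (\<forall>i<k. b i \<in> K) \<longrightarrow>
      eig_weighted_norm n Q lam v (residual k f phi a) \<le> eig_weighted_norm n Q lam v (residual k f phi b)"
    using exists_best_approximation[of k f phi] unfolding residual_def by blast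
  then show ?thesis
    unfolding is_min_def vnorm_residual_matrix[OF Q A v] by blast
qed

lemma unit_vec_col_coord:
  assumes Q: "unitary_mat n Q" and v: "v \<in> {v \<in> Kvecs K n. vnorm v = 1}"
  shows "v \<in> carrier_vec n" "(\<Sum>j<n. (cmod (col_coord n Q v j))\<^sup>2) = 1"
proof -
  from v show v': "v \<in> carrier_vec n" unfolding Kvecs_def by (auto intro: carrier_vecI)
  then show "(\<Sum>j<n. (cmod (col_coord n Q v j))\<^sup>2) = 1"
    using v sum_cmod_sq_col_coord[OF Q v'] by (simp add: vnorm_carrier)
qed

lemma vnorm_residual_le_max_norm_on:
  assumes Q: "unitary_mat n Q" and A: "A = unitary_diag n Q lam" and n: "n > 0"
    and v: "v \<in> {v \<in> Kvecs K n. vnorm v = 1}"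
  shows "vnorm ((matfun f A - pmat k a phi A) *\<^sub>v v) \<le> max_norm_on (lam ` {..<n}) (residual k f phi a)"
  unfolding vnorm_residual_matrix[OF Q A unit_vec_col_coord(1)[OF Q v]]
  by (rule eig_weighted_norm_le_max_norm_on[OF unit_vec_col_coord(2)[OF Q v] n])

lemma weight_vector_unit:
  assumes K: "real_or_complex K" and Q: "unitary_mat n Q" and A: "A = unitary_diag n Q lam"
    and entries: "\<forall>i<n. \<forall>j<n. A $$ (i,j) \<in> K"
    and w: "\<forall>mu. w mu \<ge> 0" "sum w (lam ` {..<n}) = 1" "K = \<real> \<Longrightarrow> \<forall>mu. w (cnj mu) = w mu"
  shows "weight_vector n Q lam w \<in> {v \<in> Kvecs K n. vnorm v = 1}"
proof -
  have "vnorm (weight_vector n Q lam w) = 1"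
    using weighted_sum_weight_vector[OF Q w(1), of "\<lambda>_. 1" lam] w(2) sum_cmod_sq_col_coord[OF Q]
    by (simp add: vnorm_carrier[of _ n])
  moreover have "weight_vector n Q lam w \<in> Kvecs K n"
  proof (cases "K = \<real>")
    case True
    then have "\<forall>i<n. \<forall>j<n. A $$ (i,j) \<in> \<real>" using entries by simp
    with True show ?thesis using weight_vector_real[OF Q A] w(3) unfolding Kvecs_def by simp
  qed (use K in \<open>simp add: Kvecs_def real_or_complex_def\<close>)
  ultimately show ?thesis by simp
qed

text \<open>The vector at which the min-max is attained: its squared coordinates in the eigenbasis
  distribute over the eigenvalues according to the weights that characterise the best approximation.\<close>

lemma exists_extremal_vector:
  assumes K: "real_or_complex K" and Q: "unitary_mat n Q" and A: "A = unitary_diag n Q lam"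
    and entries: "\<forall>i<n. \<forall>j<n. A $$ (i,j) \<in> K"
    and real_case: "K = \<real> \<Longrightarrow> \<forall>mu. eigenvalue A mu \<longrightarrow>
        cnj (f mu) = f (cnj mu) \<and> (\<forall>i<k. cnj (phi i mu) = phi i (cnj mu))"
    and opt: "best_uniform_approximation K (lam ` {..<n}) k f phi astar"
  shows "\<exists>vs\<in>{v \<in> Kvecs K n. vnorm v = 1}. \<forall>a. (\<forall>i<k. a i \<in> K) \<longrightarrow>
    max_norm_on (lam ` {..<n}) (residual k f phi astar) \<le> vnorm ((matfun f A - pmat k a phi A) *\<^sub>v vs)"
proof -
  interpret best_uniform_approximation K "lam ` {..<n}" k f phi astar by (rule opt)
  have "cnj mu \<in> lam ` {..<n} \<and> f (cnj mu) = cnj (f mu) \<and> (\<forall>i<k. phi i (cnj mu) = cnj (phi i mu))"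
    if "K = \<real>" "mu \<in> lam ` {..<n}" for mu
    using that real_case cnj_eigenvalue_real_unitary_diag[OF Q A, of mu] entries
      eigenvalue_unitary_diag_iff[OF Q A] by auto
  then obtain w where w: "\<forall>mu. w mu \<ge> 0" "sum w (lam ` {..<n}) = 1"
    "\<And>a. \<forall>i<k. a i \<in> K \<Longrightarrow> error\<^sup>2 \<le> (\<Sum>mu\<in>lam ` {..<n}. w mu * (cmod (residual k f phi a mu))\<^sup>2)"
    "K = \<real> \<Longrightarrow> \<forall>mu. w (cnj mu) = w mu"
    using exists_symmetric_weights by blast
  define vs where "vs = weight_vector n Q lam w"
  have "error \<le> vnorm ((matfun f A - pmat k a phi A) *\<^sub>v vs)" if "\<forall>i<k. a i \<in> K" for a
  proof -
    have "error\<^sup>2 \<le> (\<Sum>mu\<in>lam ` {..<n}. w mu * (cmod (residual k f phi a mu))\<^sup>2)" by (rule w(3)[OF that])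
    also have "\<dots> = (eig_weighted_norm n Q lam vs (residual k f phi a))\<^sup>2"
      using weighted_sum_weight_vector[OF Q w(1)] w(1)
      unfolding eig_weighted_norm_def vs_def by (simp add: sum_nonneg)
    finally have "error \<le> eig_weighted_norm n Q lam vs (residual k f phi a)"
      by (rule power2_le_imp_le) (simp add: eig_weighted_norm_def sum_nonneg)
    then show ?thesis
      unfolding vnorm_residual_matrix[OF Q A weight_vector_carrier[of n Q lam w, folded vs_def]] .
  qed
  then show ?thesis using weight_vector_unit[OF K Q A entries w(1,2,4)] unfolding vs_def error_def by blast
qed

theorem theorem1:
  fixes K :: "complex set" and n k :: nat and A :: "complex mat"
    and f :: "complex \<Rightarrow> complex" and phi :: "nat \<Rightarrow> complex \<Rightarrow> complex"
  assumes field: "K = \<real> \<or> K = UNIV" and npos: "n > 0"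
    and normal: "normal_mat n A"
    and entries: "\<forall>i<n. \<forall>j<n. A $$ (i,j) \<in> K"
    and real_case: "K = \<real> \<Longrightarrow> \<forall>lam. eigenvalue A lam \<longrightarrow>
        cnj (f lam) = f (cnj lam) \<and> (\<forall>i<k. cnj (phi i lam) = phi i (cnj lam))"
  shows "(\<forall>v \<in> {v \<in> Kvecs K n. vnorm v = 1}.
            \<exists>mu. is_min {vnorm ((matfun f A - pmat k alpha phi A) *\<^sub>v v) | alpha.
                           \<forall>i<k. alpha i \<in> K} mu)
       \<and> (\<exists>c. is_max {mu. \<exists>v \<in> {v \<in> Kvecs K n. vnorm v = 1}.
                          is_min {vnorm ((matfun f A - pmat k alpha phi A) *\<^sub>v v) | alpha.
                                  \<forall>i<k. alpha i \<in> K} mu} c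
             \<and> is_min {snorm K n (matfun f A - pmat k alpha phi A) | alpha.
                        \<forall>i<k. alpha i \<in> K} c)"
proof -
  have K: "real_or_complex K" using field unfolding real_or_complex_def .
  obtain Q lam where Q: "unitary_mat n Q" and A: "A = unitary_diag n Q lam"
    using normal_mat_unitary_diag[OF normal] by blast
  have E: "finite (lam ` {..<n})" "lam ` {..<n} \<noteq> {}" using npos by auto
  \<comment> \<open>the coefficients of the best uniform approximation on the spectrum and the extremal vector
    form a saddle point of the residual norm\<close>
  obtain astar where opt: "best_uniform_approximation K (lam ` {..<n}) k f phi astar"
    using exists_best_uniform_approximation[OF K E] by blast
  obtain vs where vs: "vs \<in> {v \<in> Kvecs K n. vnorm v = 1}" "\<And>a. \<forall>i<k. a i \<in> K \<Longrightarrow>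
      max_norm_on (lam ` {..<n}) (residual k f phi astar) \<le> vnorm ((matfun f A - pmat k a phi A) *\<^sub>v vs)"
    using exists_extremal_vector[OF K Q A entries real_case opt] by blast
  note upper = vnorm_residual_le_max_norm_on[OF Q A npos, where K = K]
  have bdd: "bdd_above ((\<lambda>v. vnorm ((matfun f A - pmat k alpha phi A) *\<^sub>v v)) ` {v \<in> Kvecs K n. vnorm v = 1})"
    for alpha using upper by (intro bdd_aboveI2) blast
  note saddle = saddle_point_min_max[where F = "\<lambda>v alpha. vnorm ((matfun f A - pmat k alpha phi A) *\<^sub>v v)"
      and P = "\<lambda>alpha. \<forall>i<k. alpha i \<in> K", OF vs(1) best_uniform_approximation.astar[OF opt]
      vs(2) upper bdd]
  show ?thesis
    using saddle exists_best_residual_norm[OF K Q A unit_vec_col_coord(1)[OF Q, where K = K]]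
    unfolding snorm_def by blast
qed

end
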